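(* Let ${\cal G}$ be a locally finite graph and let $\phi:(0,\infty)\to(0,\infty)$ be non-decreasing. Suppose that for every admissible $\Omega\subseteq{\cal G}$, $${\cal A}(\partial\Omega)\ge\frac{{\cal V}(\Omega)}{\phi({\cal V}(\Omega))}.$$ Let $F(x)=\int_x^\infty\frac{(\phi(4/u))^2}{u}\,du$ and $C=\frac{1}{32\rho_{\sup}}$. Then for every vertex $x$ and $t>0$, $$K(x,x,t)\le F^{-1}(Ct).$$
   Context: A graph ${\cal G}$: undirected graph $(V,E)$ (multiple edges, self-loops allowed), edge lengths $\ell_e>0$, boundary vertices $\partial{\cal G}$, interior vertices $\mathring V$, vertex measure ${\cal V}$ (${\cal V}(v)>0$), edge measure ${\cal E}$ (zero on vertices, $a_e>0$ times Lebesgue on the interior of edge $e$); identified with its geometric realization; locally finite (each vertex on finitely many edges). $\rho_{\sup}=\sup_v{\cal V}(v)^{-1}\sum_{e\ni v}{\cal E}(e)/2$. For open $\Omega$ with finite topological boundary, ${\cal A}(\partial\Omega)=\sum_{x\in\partial\Omega\setminus V}a_{e(x)}+\sum_{v\in\partial\Omega\cap V}\sum_{e:\,v\in\overline{\Omega\cap e^\circ}}a_e$ ($e(x)$ the edge containing $x$, $e^\circ$ the open interior of $e$); $\Omega$ is admissible if open, with finite boundary, disjoint from $\partial{\cal G}$; ${\cal V}(\Omega)$ is its ${\cal V}$-measure. The Laplacian on edgewise linear functions is $(\Delta f)(v)={\cal V}(v)^{-1}\sum_{e\sim\{u,v\}}a_e(f(v)-f(u))/\ell_e$. For finite $A\subseteq\mathring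 V$, $K_A(x,y,t)=\sum_ie^{-t\lambda_i}\phi_i(x)\phi_i(y)$ with $\{\phi_i\}$ an orthonormal (for $\int fg\,d{\cal V}$) eigenbasis, $\Delta_A\phi_i=\lambda_i\phi_i$, of $\Delta_A$ (= $\Delta$ at vertices of $A$, $0$ elsewhere) on edgewise linear functions vanishing off $A$. The minimal non-negative heat kernel is $K(x,y,t)=\lim_iK_{A_i}(x,y,t)$ for any increasing sequence of finite sets $A_i\subseteq\mathring V$ with union $\mathring V$ (the limit exists and is independent of the sequence). *)

theory Defs
  imports "HOL-Analysis.Analysis"
begin

text \<open>A (metric) graph. Vertex set = UNIV :: 'v set, edge set = UNIV :: 'e set.
  Each edge has two (ordered, for bookkeeping) endpoints; a self-loop has equal endpoints;
  multiple edges are allowed.\<close>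
record ('v, 'e) mgraph =
  ends  :: "'e \<Rightarrow> 'v \<times> 'v"   \<comment> \<open>endpoints; edge e is parametrised by s in (0, len e), s near 0 = fst endpoint\<close>
  len   :: "'e \<Rightarrow> real"
  cond  :: "'e \<Rightarrow> real"         \<comment> \<open>a_e, density of the edge measure\<close>
  vmeas :: "'v \<Rightarrow> real"
  bdry  :: "'v set"

definition incident :: "('v,'e) mgraph \<Rightarrow> 'v \<Rightarrow> 'e set" where
  "incident G v = {e. fst (ends G e) = v \<or> snd (ends G e) = v}"

definition other_end :: "('v,'e) mgraph \<Rightarrow> 'e \<Rightarrow> 'v \<Rightarrow> 'v" where
  "other_end G e v = (if fst (ends G e) = v then snd (ends G e) else fst (ends G e))"

definition wf_graph :: "('v,'e) mgraph \<Rightarrow> bool" where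
  "wf_graph G \<longleftrightarrow> (\<forall>e. len G e > 0) \<and> (\<forall>e. cond G e > 0) \<and> (\<forall>v. vmeas G v > 0)"

definition locally_finite :: "('v,'e) mgraph \<Rightarrow> bool" where
  "locally_finite G \<longleftrightarrow> (\<forall>v. finite (incident G v))"

text \<open>Points of the geometric realisation: vertices, and interior points of edges.\<close>
datatype ('v, 'e) gpoint = Vx 'v | Ept 'e real

definition points :: "('v,'e) mgraph \<Rightarrow> ('v,'e) gpoint set" where
  "points G = range Vx \<union> {Ept e s | e s. 0 < s \<and> s < len G e}"

definition near_end :: "('v,'e) mgraph \<Rightarrow> 'e \<Rightarrow> 'v \<Rightarrow> real \<Rightarrow> real \<Rightarrow> bool" where
  "near_end G e v eps s \<longleftrightarrow> 0 < s \<and> s < len G e \<and>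
     ((fst (ends G e) = v \<and> s < eps) \<or> (snd (ends G e) = v \<and> len G e - s < eps))"

fun nbhd :: "('v,'e) mgraph \<Rightarrow> ('v,'e) gpoint \<Rightarrow> real \<Rightarrow> ('v,'e) gpoint set" where
  "nbhd G (Vx v) eps = insert (Vx v) {Ept e s | e s. near_end G e v eps s}"
| "nbhd G (Ept e s) eps = {Ept e r | r. 0 < r \<and> r < len G e \<and> \<bar>r - s\<bar> < eps}"

definition gopen :: "('v,'e) mgraph \<Rightarrow> ('v,'e) gpoint set \<Rightarrow> bool" where
  "gopen G \<Omega> \<longleftrightarrow> \<Omega> \<subseteq> points G \<and> (\<forall>p\<in>\<Omega>. \<exists>eps>0. nbhd G p eps \<subseteq> \<Omega>)"

definition gboundary :: "('v,'e) mgraph \<Rightarrow> ('v,'e) gpoint set \<Rightarrow> ('v,'e) gpoint set" where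
  "gboundary G \<Omega> = {p \<in> points G. p \<notin> \<Omega> \<and> (\<forall>eps>0. nbhd G p eps \<inter> \<Omega> \<noteq> {})}"

definition in_closure_edge :: "('v,'e) mgraph \<Rightarrow> ('v,'e) gpoint set \<Rightarrow> 'e \<Rightarrow> 'v \<Rightarrow> bool" where
  "in_closure_edge G \<Omega> e v \<longleftrightarrow> (\<forall>eps>0. \<exists>s. near_end G e v eps s \<and> Ept e s \<in> \<Omega>)"

definition boundary_area :: "('v,'e) mgraph \<Rightarrow> ('v,'e) gpoint set \<Rightarrow> real" where
  "boundary_area G \<Omega> =
     (\<Sum>p\<in>{p \<in> gboundary G \<Omega>. p \<notin> range Vx}. (case p of Ept e s \<Rightarrow> cond G e | Vx v \<Rightarrow> 0))
   + (\<Sum>v\<in>{v. Vx v \<in> gboundary G \<Omega>}. \<Sum>e\<in>{e. in_closure_edge G \<Omega> e v}. cond G e)"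

definition admissible :: "('v,'e) mgraph \<Rightarrow> ('v,'e) gpoint set \<Rightarrow> bool" where
  "admissible G \<Omega> \<longleftrightarrow> gopen G \<Omega> \<and> finite (gboundary G \<Omega>) \<and> \<Omega> \<inter> Vx ` bdry G = {}"

definition vol :: "('v,'e) mgraph \<Rightarrow> ('v,'e) gpoint set \<Rightarrow> real" where
  "vol G \<Omega> = infsum (vmeas G) {v. Vx v \<in> \<Omega>}"

definition rho_sup :: "('v,'e) mgraph \<Rightarrow> ennreal" where
  "rho_sup G = (SUP v. ennreal ((\<Sum>e\<in>incident G v. cond G e * len G e / 2) / vmeas G v))"

text \<open>Graph Laplacian at a vertex on (edgewise linear) functions given by vertex values.\<close>
definition glap :: "('v,'e) mgraph \<Rightarrow> ('v \<Rightarrow> real) \<Rightarrow> 'v \<Rightarrow> real" where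
  "glap G f v = (\<Sum>e\<in>incident G v. cond G e * (f v - f (other_end G e v)) / len G e) / vmeas G v"

definition is_eigenbasis :: "('v,'e) mgraph \<Rightarrow> 'v set \<Rightarrow> (nat \<Rightarrow> real) \<Rightarrow> (nat \<Rightarrow> 'v \<Rightarrow> real) \<Rightarrow> bool" where
  "is_eigenbasis G A lam ph \<longleftrightarrow>
     (\<forall>i<card A. \<forall>u. u \<notin> A \<longrightarrow> ph i u = 0) \<and>
     (\<forall>i<card A. \<forall>j<card A. (\<Sum>u\<in>A. vmeas G u * ph i u * ph j u) = (if i = j then 1 else 0)) \<and>
     (\<forall>i<card A. \<forall>v\<in>A. glap G (ph i) v = lam i * ph i v)"

definition heatK_fin :: "('v,'e) mgraph \<Rightarrow> 'v set \<Rightarrow> 'v \<Rightarrow> 'v \<Rightarrow> real \<Rightarrow> real" where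
  "heatK_fin G A x y t =
     (let B = (SOME B. is_eigenbasis G A (fst B) (snd B))
      in \<Sum>i<card A. exp (- t * fst B i) * snd B i x * snd B i y)"

text \<open>Minimal heat kernel (at vertices): limit over finite subsets of the interior vertices.\<close>
definition heatK :: "('v,'e) mgraph \<Rightarrow> 'v \<Rightarrow> 'v \<Rightarrow> real \<Rightarrow> real" where
  "heatK G x y t = Lim (finite_subsets_at_top (- bdry G)) (\<lambda>A. heatK_fin G A x y t)"

text \<open>Generalised inverse of a (decreasing) function F : (0,\<infinity>) \<rightarrow> [0,\<infinity>]; inf of empty set is \<infinity>.\<close>
definition gen_inv :: "(real \<Rightarrow> ennreal) \<Rightarrow> ennreal \<Rightarrow> ereal" where
  "gen_inv F s = Inf {ereal y | y. 0 < y \<and> F y \<le> s}"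

end

theory Submission
  imports Defs
begin

(* Fix a finite set A of interior vertices. The Dirichlet Laplacian Delta_A has an orthonormal
   eigenbasis (maximise the Dirichlet form on the unit sphere orthogonal to the eigenfunctions
   already found), which defines K_A. Writing Delta_A = c - (c - Delta_A) with c above all
   degrees, c - Delta_A has non-negative entries, so the heat semigroup is positivity preserving,
   sub-Markovian and increasing in A; hence K(x, x, t) is the supremum of K_A(x, x, t).

   Integrating the isoperimetric inequality over the superlevel sets of g^2 (coarea) and
   using AM-GM on each edge gives the Faber-Krahn inequality
   ||g||^2 <= 8 rho phi(m)^2 D(g) for g >= 0 supported on a set of measure at most m.
   For I(t) = K_A(x, x, t) = ||f||^2 with f = K_A(x, ., t/2) we have -I' = D(f) and
   f has mass at most 1; Faber-Krahn applied to (f - I/4)^+ yields Nash's inequality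
   -I' >= I / (16 rho phi(4/I)^2). Separating variables gives F(I(t)) >= t / (16 rho), which
   exceeds C t, so I(t) <= F^-1(C t) for every A. *)

lemma homogeneous_system_nontrivial_solution:
  fixes m :: "'i \<Rightarrow> 'j \<Rightarrow> real"
  assumes "finite I" "finite J" "card I < card J"
  shows "\<exists>c. (\<exists>j\<in>J. c j \<noteq> 0) \<and> (\<forall>i\<in>I. (\<Sum>j\<in>J. m i j * c j) = 0)"
  using assms
proof (induction I arbitrary: J m rule: finite_induct)
  case empty
  then show ?case by (intro exI[of _ "\<lambda>_. 1"]) (auto simp: card_gt_0_iff)
next
  case (insert i0 I)
  show ?case
  proof (cases "\<forall>j\<in>J. m i0 j = 0")
    case True
    with insert.IH[of J m] insert.prems insert.hyps show ?thesis by auto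
  next
    case False
    then obtain j0 where j0: "j0 \<in> J" "m i0 j0 \<noteq> 0" by blast
    \<comment> \<open>eliminate the unknown \<open>c j0\<close> using the equation of row \<open>i0\<close>\<close>
    define J' where "J' = J - {j0}"
    define m' where "m' i j = m i j - m i j0 * m i0 j / m i0 j0" for i j
    have "card I < card J'"
      using insert j0 by (simp add: J'_def card_Diff_singleton)
    with insert.IH[of J' m'] insert.prems obtain c' where
      c': "\<exists>j\<in>J'. c' j \<noteq> 0" "\<forall>i\<in>I. (\<Sum>j\<in>J'. m' i j * c' j) = 0"
      by (auto simp: J'_def)
    define c where "c j = (if j = j0 then - (\<Sum>j\<in>J'. m i0 j * c' j) / m i0 j0 else c' j)" for j
    have split: "(\<Sum>j\<in>J. m i j * c j) = m i j0 * c j0 + (\<Sum>j\<in>J'. m i j * c' j)" for i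
    proof -
      have "(\<Sum>j\<in>J'. m i j * c j) = (\<Sum>j\<in>J'. m i j * c' j)"
        by (rule sum.cong) (auto simp: c_def J'_def)
      then show ?thesis
        using j0 insert.prems by (simp add: J'_def sum.remove)
    qed
    have "(\<Sum>j\<in>J. m i j * c j) = 0" if "i \<in> insert i0 I" for i
    proof (cases "i = i0")
      case True
      with j0 show ?thesis by (simp only: split) (simp add: c_def)
    next
      case False
      with that have "(\<Sum>j\<in>J. m i j * c j) = (\<Sum>j\<in>J'. m' i j * c' j)"
        using j0 by (simp only: split) (simp add: c_def m'_def sum_subtractf sum_distrib_left
            sum_divide_distrib algebra_simps)
      with False that c'(2) show ?thesis by auto
    qed
    moreover have "\<exists>j\<in>J. c j \<noteq> 0" using c' by (auto simp: c_def J'_def)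
    ultimately show ?thesis by blast
  qed
qed

lemma nonpos_of_linear_le_quadratic:
  fixes H X :: real
  assumes "\<And>\<epsilon>. \<epsilon> > 0 \<Longrightarrow> 2 * \<epsilon> * H \<le> \<epsilon> * (\<epsilon> * X)"
  shows "H \<le> 0"
proof (rule ccontr)
  assume "\<not> H \<le> 0"
  then have H: "H > 0" by simp
  define \<epsilon> where "\<epsilon> = H / (1 + \<bar>X\<bar>)"
  have \<epsilon>: "\<epsilon> > 0" using H by (simp add: \<epsilon>_def)
  then have "2 * H \<le> \<epsilon> * X" using assms[OF \<epsilon>] by simp
  also have "\<dots> \<le> \<epsilon> * \<bar>X\<bar>" using \<epsilon> by (simp add: mult_left_mono)
  also have "\<dots> < H" using H by (simp add: \<epsilon>_def field_simps)
  finally show False using H by simp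
qed

lemma weighted_amgm:
  fixes c l \<theta> x y :: real
  assumes "c > 0" "l > 0" "\<theta> > 0" "y \<ge> 0"
  shows "c * (\<bar>x\<bar> * y) \<le> \<theta> / 2 * (c / l * x\<^sup>2) + 1 / (2 * \<theta>) * (c * l * y\<^sup>2)"
proof -
  have "0 \<le> (\<theta> * \<bar>x\<bar> - l * y)\<^sup>2" by simp
  then have "2 * \<theta> * l * (\<bar>x\<bar> * y) \<le> \<theta>\<^sup>2 * x\<^sup>2 + l\<^sup>2 * y\<^sup>2"
    by (simp add: power2_eq_square algebra_simps)
  then have "c / (2 * \<theta> * l) * (2 * \<theta> * l * (\<bar>x\<bar> * y)) \<le> c / (2 * \<theta> * l) * (\<theta>\<^sup>2 * x\<^sup>2 + l\<^sup>2 * y\<^sup>2)"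
    using assms by (intro mult_left_mono) auto
  then show ?thesis using assms by (simp add: field_simps power2_eq_square)
qed

lemma borel_measurable_antimono_max:
  fixes \<psi> :: "real \<Rightarrow> real"
  assumes "\<And>u v. 0 < u \<Longrightarrow> u \<le> v \<Longrightarrow> \<psi> v \<le> \<psi> u" and "a > 0"
  shows "(\<lambda>u. \<psi> (max u a)) \<in> borel_measurable borel"
proof -
  have "mono (\<lambda>u. - \<psi> (max u a))"
    using assms by (intro monoI) simp
  then show ?thesis
    using borel_measurable_mono borel_measurable_uminus_eq by blast
qed

lemma antitone_of_derivative_nonpos:
  fixes I D :: "real \<Rightarrow> real"
  assumes deriv: "\<And>\<tau>. \<tau> \<in> {0..t} \<Longrightarrow> (I has_real_derivative - D \<tau>) (at \<tau>)"
    and D_nonneg: "\<And>\<tau>. \<tau> \<in> {0..t} \<Longrightarrow> D \<tau> \<ge> 0" and \<tau>: "\<tau> \<in> {0..t}"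
  shows "I t \<le> I \<tau>"
proof (rule DERIV_nonpos_imp_nonincreasing[of \<tau> t I])
  fix x assume "\<tau> \<le> x" "x \<le> t"
  with \<tau> have "x \<in> {0..t}" by simp
  with deriv D_nonneg show "\<exists>y. (I has_real_derivative y) (at x) \<and> y \<le> 0"
    by (intro exI[of _ "- D x"]) simp
qed (use \<tau> in simp)

lemma ennreal_inverse_le_mult:
  fixes J \<psi> \<kappa> d :: real
  assumes "J > 0" "\<psi> > 0" "\<kappa> > 0" "J / (\<kappa> * \<psi>) \<le> d"
  shows "ennreal (1 / \<kappa>) \<le> ennreal (\<psi> / J) * ennreal d"
proof -
  have "1 / \<kappa> = (\<psi> / J) * (J / (\<kappa> * \<psi>))"
    using assms by (simp add: field_simps)
  also have "\<dots> \<le> (\<psi> / J) * d"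
    using assms by (intro mult_left_mono) auto
  finally have "ennreal (1 / \<kappa>) \<le> ennreal (\<psi> / J * d)"
    by (rule ennreal_leI)
  also have "\<dots> = ennreal (\<psi> / J) * ennreal d"
    using assms by (intro ennreal_mult) (auto intro: order_trans[OF _ assms(4)])
  finally show ?thesis .
qed

lemma nn_integral_time_reversed_substitution:
  fixes I D :: "real \<Rightarrow> real" and k :: "real \<Rightarrow> ennreal"
  assumes t: "t > 0" and k: "k \<in> borel_measurable borel"
    and deriv: "\<And>\<tau>. \<tau> \<in> {0..t} \<Longrightarrow> (I has_real_derivative - D \<tau>) (at \<tau>)"
    and cont: "continuous_on {0..t} D" and D_nonneg: "\<And>\<tau>. \<tau> \<in> {0..t} \<Longrightarrow> D \<tau> \<ge> 0"
  shows "(\<integral>\<^sup>+u. k u * indicator {I t..I 0} u \<partial>lborel)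
    = (\<integral>\<^sup>+\<sigma>. k (I (t - \<sigma>)) * ennreal (D (t - \<sigma>)) * indicator {0..t} \<sigma> \<partial>lborel)"
proof -
  have "(\<integral>\<^sup>+u. k u * indicator {(\<lambda>\<sigma>. I (t - \<sigma>)) 0..(\<lambda>\<sigma>. I (t - \<sigma>)) t} u \<partial>lborel)
    = (\<integral>\<^sup>+\<sigma>. k (I (t - \<sigma>)) * ennreal (D (t - \<sigma>)) * indicator {0..t} \<sigma> \<partial>lborel)"
  proof (rule nn_integral_substitution_aux[OF k])
    show "((\<lambda>\<sigma>. I (t - \<sigma>)) has_real_derivative D (t - \<sigma>)) (at \<sigma>)" if "\<sigma> \<in> {0..t}" for \<sigma>
    proof -
      have "((\<lambda>\<sigma>. I (t - \<sigma>)) has_real_derivative (- D (t - \<sigma>)) * (- 1)) (at \<sigma>)"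
        using that by (intro DERIV_chain2[OF deriv]) (auto intro!: derivative_eq_intros)
      then show ?thesis by simp
    qed
    show "continuous_on {0..t} (\<lambda>\<sigma>. D (t - \<sigma>))"
      by (rule continuous_on_compose2[OF cont continuous_on_diff[OF continuous_on_const continuous_on_id]])
        auto
  qed (use t D_nonneg in auto)
  then show ?thesis by simp
qed

text \<open>Separation of variables: after the substitution \<open>u = I(t - \<sigma>)\<close> the differential
  inequality integrates to \<open>\<integral>\<^bsub>I t\<^esub>\<^bsup>I 0\<^esup> \<psi>(u)/u du \<ge> t/\<kappa>\<close>.\<close>

lemma tail_integral_ge_of_decay:
  fixes I D \<psi> :: "real \<Rightarrow> real"
  assumes t: "t > 0" and \<kappa>: "\<kappa> > 0"
    and deriv: "\<And>\<tau>. \<tau> \<in> {0..t} \<Longrightarrow> (I has_real_derivative - D \<tau>) (at \<tau>)"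
    and cont: "continuous_on {0..t} D"
    and I_pos: "\<And>\<tau>. \<tau> \<in> {0..t} \<Longrightarrow> I \<tau> > 0"
    and \<psi>_pos: "\<And>u. u > 0 \<Longrightarrow> \<psi> u > 0"
    and \<psi>_antimono: "\<And>u v. 0 < u \<Longrightarrow> u \<le> v \<Longrightarrow> \<psi> v \<le> \<psi> u"
    and decay: "\<And>\<tau>. \<tau> \<in> {0..t} \<Longrightarrow> I \<tau> / (\<kappa> * \<psi> (I \<tau>)) \<le> D \<tau>"
  shows "ennreal (t / \<kappa>) \<le> (\<integral>\<^sup>+ u \<in> {I t<..}. ennreal (\<psi> u / u) \<partial>lborel)"
proof -
  define a where "a = I t"
  have a: "a > 0" using I_pos t by (simp add: a_def)
  have D_nonneg: "D \<tau> \<ge> 0" if "\<tau> \<in> {0..t}" for \<tau>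
    using I_pos[OF that] \<psi>_pos[OF I_pos[OF that]] \<kappa> by (intro order_trans[OF _ decay[OF that]]) simp
  have a_le: "a \<le> I \<tau>" if "\<tau> \<in> {0..t}" for \<tau>
    unfolding a_def using deriv D_nonneg that by (rule antitone_of_derivative_nonpos)
  \<comment> \<open>capping below at \<open>a\<close> changes nothing on \<open>[I t, I 0]\<close> but makes the integrand measurable\<close>
  define k where "k u = ennreal (\<psi> (max u a) / max u a)" for u
  have k_measurable: "k \<in> borel_measurable borel"
    unfolding k_def using borel_measurable_antimono_max[OF \<psi>_antimono a] by measurable
  have "ennreal (t / \<kappa>) = (\<integral>\<^sup>+\<sigma>. ennreal (1 / \<kappa>) * indicator {0..t} \<sigma> \<partial>lborel)"
    using t \<kappa> by (simp add: nn_integral_cmult_indicator ennreal_mult[symmetric])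
  also have "\<dots> \<le> (\<integral>\<^sup>+\<sigma>. k (I (t - \<sigma>)) * ennreal (D (t - \<sigma>)) * indicator {0..t} \<sigma> \<partial>lborel)"
  proof (intro nn_integral_mono)
    fix \<sigma>
    show "ennreal (1 / \<kappa>) * indicator {0..t} \<sigma> \<le> k (I (t - \<sigma>)) * ennreal (D (t - \<sigma>)) * indicator {0..t} \<sigma>"
    proof (cases "\<sigma> \<in> {0..t}")
      case True
      then have \<tau>: "t - \<sigma> \<in> {0..t}" by auto
      define J where "J = I (t - \<sigma>)"
      have J: "J > 0" "a \<le> J" using I_pos[OF \<tau>] a_le[OF \<tau>] by (simp_all add: J_def)
      have "ennreal (1 / \<kappa>) \<le> ennreal (\<psi> J / J) * ennreal (D (t - \<sigma>))"
        using J \<psi>_pos[OF J(1)] \<kappa> decay[OF \<tau>] by (intro ennreal_inverse_le_mult) (auto simp: J_def)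
      moreover have "k (I (t - \<sigma>)) = ennreal (\<psi> J / J)"
        using J by (simp add: k_def J_def[symmetric] max_def)
      ultimately show ?thesis using True by simp
    qed simp
  qed
  also have "\<dots> = (\<integral>\<^sup>+u. k u * indicator {I t..I 0} u \<partial>lborel)"
    by (rule nn_integral_time_reversed_substitution[OF t k_measurable deriv cont D_nonneg, symmetric])
  also have "\<dots> \<le> (\<integral>\<^sup>+ u \<in> {I t<..}. ennreal (\<psi> u / u) \<partial>lborel)"
  proof (rule nn_integral_mono_AE)
    show "AE u in lborel. k u * indicator {I t..I 0} u \<le> ennreal (\<psi> u / u) * indicator {I t<..} u"
      using AE_lborel_singleton[of a]
    proof eventually_elim
      case (elim u)
      show ?case
      proof (cases "u \<in> {I t..I 0}")
        case True
        then have "a < u" using elim by (auto simp: a_def)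
        then show ?thesis using True by (simp add: k_def a_def)
      qed simp
    qed
  qed
  finally show ?thesis .
qed

lemma ennreal_divide_numeral_mult:
  assumes "r > 0" "t \<ge> 0"
  shows "1 / (numeral n * ennreal r) * ennreal t = ennreal (t / (numeral n * r))"
proof -
  have "numeral n * ennreal r = ennreal (numeral n * r)"
    using assms by (simp add: ennreal_mult' ennreal_numeral[symmetric] del: ennreal_numeral)
  then have "1 / (numeral n * ennreal r) = ennreal (1 / (numeral n * r))"
    using assms by (simp add: divide_ennreal[symmetric])
  then show ?thesis using assms by (simp add: ennreal_mult[symmetric])
qed

lemma tendsto_SUP_finite_subsets_mono:
  fixes f :: "'a set \<Rightarrow> real"
  assumes mono: "\<And>A B. finite B \<Longrightarrow> B \<subseteq> S \<Longrightarrow> A \<subseteq> B \<Longrightarrow> f A \<le> f B"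
    and bounded: "\<And>A. finite A \<Longrightarrow> A \<subseteq> S \<Longrightarrow> f A \<le> M"
  shows "(f \<longlongrightarrow> (SUP A\<in>{A. finite A \<and> A \<subseteq> S}. f A)) (finite_subsets_at_top S)"
proof -
  let ?I = "{A. finite A \<and> A \<subseteq> S}"
  have bdd: "bdd_above (f ` ?I)" using bounded by (intro bdd_aboveI[where M = M]) auto
  show ?thesis
  proof (rule order_tendstoI)
    fix a
    assume "a < (SUP A\<in>?I. f A)"
    then obtain A0 where "A0 \<in> ?I" "a < f A0"
      using less_cSUP_iff[OF _ bdd] by blast
    with mono show "eventually (\<lambda>A. a < f A) (finite_subsets_at_top S)"
      unfolding eventually_finite_subsets_at_top by (intro exI[of _ A0]) (auto intro: less_le_trans)
  next
    fix a
    assume "(SUP A\<in>?I. f A) < a"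
    then show "eventually (\<lambda>A. f A < a) (finite_subsets_at_top S)"
      by (intro eventually_finite_subsets_at_top_weakI) (auto intro: le_less_trans cSUP_upper[OF _ bdd])
  qed
qed

definition supported_on :: "'v set \<Rightarrow> ('v \<Rightarrow> real) \<Rightarrow> bool" where
  "supported_on A f \<longleftrightarrow> (\<forall>u. u \<notin> A \<longrightarrow> f u = 0)"

fun gpoint_edge :: "('v, 'e) gpoint \<Rightarrow> 'e" where
  "gpoint_edge (Ept e r) = e"
| "gpoint_edge (Vx v) = undefined"

section \<open>Dirichlet forms on finite sets of vertices\<close>

locale locfin_graph =
  fixes G :: "('v, 'e) mgraph"
  assumes wf: "wf_graph G" and locfin: "locally_finite G"
begin

abbreviation end1 :: "'e \<Rightarrow> 'v" where "end1 e \<equiv> fst (ends G e)"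
abbreviation end2 :: "'e \<Rightarrow> 'v" where "end2 e \<equiv> snd (ends G e)"

definition weight :: "'e \<Rightarrow> real" where
  "weight e = cond G e / len G e"

definition edges_at :: "'v set \<Rightarrow> 'e set" where
  "edges_at A = (\<Union>v\<in>A. incident G v)"

definition inner_on :: "'v set \<Rightarrow> ('v \<Rightarrow> real) \<Rightarrow> ('v \<Rightarrow> real) \<Rightarrow> real" where
  "inner_on A f g = (\<Sum>u\<in>A. vmeas G u * f u * g u)"

text \<open>On edgewise linear functions \<open>\<integral>\<^sub>e a\<^sub>e f'\<^sup>2 = (a\<^sub>e / \<ell>\<^sub>e) (f(end1 e) - f(end2 e))\<^sup>2\<close>,
  so functions are represented by their vertex values and the energy becomes a sum over edges.\<close>

definition dirichlet_form :: "'v set \<Rightarrow> ('v \<Rightarrow> real) \<Rightarrow> ('v \<Rightarrow> real) \<Rightarrow> real" where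
  "dirichlet_form A f g =
     (\<Sum>e\<in>edges_at A. weight e * (f (end1 e) - f (end2 e)) * (g (end1 e) - g (end2 e)))"

lemma len_pos: "len G e > 0"
  using wf by (simp add: wf_graph_def)

lemma cond_pos: "cond G e > 0"
  using wf by (simp add: wf_graph_def)

lemma vmeas_pos: "vmeas G v > 0"
  using wf by (simp add: wf_graph_def)

lemma weight_pos: "weight e > 0"
  using len_pos cond_pos by (simp add: weight_def)

lemma finite_incident: "finite (incident G v)"
  using locfin by (simp add: locally_finite_def)

lemma finite_edges_at: "finite A \<Longrightarrow> finite (edges_at A)"
  by (simp add: edges_at_def finite_incident)

lemma incident_iff: "e \<in> incident G v \<longleftrightarrow> end1 e = v \<or> end2 e = v"
  by (simp add: incident_def)

lemma green_formula:
  assumes A: "finite A" and f: "supported_on A f" and g: "supported_on A g"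
  shows "inner_on A g (glap G f) = dirichlet_form A f g"
proof -
  define X where "X v e = g v * (weight e * (f v - f (other_end G e v)))" for v e
  have "inner_on A g (glap G f) = (\<Sum>v\<in>A. \<Sum>e\<in>incident G v. X v e)"
    unfolding inner_on_def
    by (rule sum.cong) (auto simp: glap_def X_def weight_def sum_distrib_left
        vmeas_pos[THEN less_imp_neq, symmetric] field_simps)
  also have "\<dots> = (\<Sum>v\<in>A. \<Sum>e\<in>edges_at A. if e \<in> incident G v then X v e else 0)"
    by (rule sum.cong[OF refl], subst sum.If_cases)
      (auto simp: A finite_edges_at edges_at_def finite_incident intro!: sum.cong)
  also have "\<dots> = (\<Sum>e\<in>edges_at A. \<Sum>v\<in>A. if e \<in> incident G v then X v e else 0)"
    by (rule sum.swap)
  also have "\<dots> = dirichlet_form A f g"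
    unfolding dirichlet_form_def
  proof (rule sum.cong[OF refl])
    fix e
    have "(\<Sum>v\<in>A. if e \<in> incident G v then X v e else 0) = (\<Sum>v\<in>A \<inter> {end1 e, end2 e}. X v e)"
      using A by (subst sum.inter_restrict) (auto simp: incident_iff intro!: sum.cong)
    also have "\<dots> = (\<Sum>v\<in>{end1 e, end2 e}. X v e)"
      using g by (intro sum.mono_neutral_left) (auto simp: X_def supported_on_def)
    also have "\<dots> = weight e * (f (end1 e) - f (end2 e)) * (g (end1 e) - g (end2 e))"
      by (cases "end1 e = end2 e") (auto simp: X_def other_end_def algebra_simps)
    finally show "(\<Sum>v\<in>A. if e \<in> incident G v then X v e else 0) =
        weight e * (f (end1 e) - f (end2 e)) * (g (end1 e) - g (end2 e))" .
  qed
  finally show ?thesis .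
qed

lemma inner_on_commute: "inner_on A f g = inner_on A g f"
  by (simp add: inner_on_def mult_ac)

lemma inner_on_sum_right:
  "finite K \<Longrightarrow> inner_on A f (\<lambda>u. \<Sum>k\<in>K. a k * h k u) = (\<Sum>k\<in>K. a k * inner_on A f (h k))"
  by (simp add: inner_on_def sum_distrib_left sum_distrib_right mult_ac sum.swap[of _ A])

lemma inner_on_scale_left: "inner_on A (\<lambda>v. a * f v) g = a * inner_on A f g"
  by (simp add: inner_on_def sum_distrib_left mult_ac)

lemma inner_on_add_scaled_left:
  "inner_on A (\<lambda>v. f v + a * h v) g = inner_on A f g + a * inner_on A h g"
  by (simp add: inner_on_def sum.distrib sum_distrib_left algebra_simps)

lemma inner_on_self_nonneg: "inner_on A f f \<ge> 0"
  unfolding inner_on_def by (intro sum_nonneg) (simp add: mult.assoc vmeas_pos less_imp_le)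

lemma inner_on_self_pos:
  assumes "finite A" "u \<in> A" "f u \<noteq> 0"
  shows "inner_on A f f > 0"
  unfolding inner_on_def
proof (rule sum_pos2[OF assms(1,2)])
  show "0 < vmeas G u * f u * f u"
    using assms(3) vmeas_pos[of u] by (metis mult.assoc mult_pos_pos not_real_square_gt_zero)
qed (simp add: mult.assoc vmeas_pos less_imp_le)

lemma inner_on_self_eq_0D:
  "finite A \<Longrightarrow> inner_on A f f = 0 \<Longrightarrow> u \<in> A \<Longrightarrow> f u = 0"
  using inner_on_self_pos by fastforce

lemma dirichlet_form_commute: "dirichlet_form A f g = dirichlet_form A g f"
  by (simp add: dirichlet_form_def mult_ac)

lemma dirichlet_form_scale: "dirichlet_form A (\<lambda>v. a * f v) (\<lambda>v. a * f v) = a\<^sup>2 * dirichlet_form A f f"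
  by (simp add: dirichlet_form_def sum_distrib_left power2_eq_square algebra_simps)

lemma inner_on_scale: "inner_on A (\<lambda>v. a * f v) (\<lambda>v. a * f v) = a\<^sup>2 * inner_on A f f"
  by (simp add: inner_on_def sum_distrib_left power2_eq_square mult_ac)

lemma inner_on_add_scaled:
  "inner_on A (\<lambda>v. f v + a * h v) (\<lambda>v. f v + a * h v) =
     inner_on A f f + 2 * a * inner_on A f h + a\<^sup>2 * inner_on A h h"
  unfolding inner_on_def sum_distrib_left sum.distrib[symmetric]
  by (rule sum.cong[OF refl]) (simp add: algebra_simps power2_eq_square)

lemma dirichlet_form_add_scaled:
  "dirichlet_form A (\<lambda>v. f v + a * h v) (\<lambda>v. f v + a * h v) =
     dirichlet_form A f f + 2 * a * dirichlet_form A f h + a\<^sup>2 * dirichlet_form A h h"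
  unfolding dirichlet_form_def sum_distrib_left sum.distrib[symmetric]
  by (rule sum.cong[OF refl]) (simp add: algebra_simps power2_eq_square)

lemma inner_on_scale_right: "inner_on A f (\<lambda>v. a * g v) = a * inner_on A f g"
  by (simp add: inner_on_def sum_distrib_left mult_ac)

lemma inner_on_cong_right: "(\<And>v. v \<in> A \<Longrightarrow> g v = h v) \<Longrightarrow> inner_on A f g = inner_on A f h"
  by (simp add: inner_on_def)

lemma orthogonal_family_card_le:
  assumes A: "finite A"
    and orth: "\<And>i j. i < n \<Longrightarrow> j < n \<Longrightarrow> i \<noteq> j \<Longrightarrow> inner_on A (\<psi> i) (\<psi> j) = 0"
    and nonzero: "\<And>j. j < n \<Longrightarrow> inner_on A (\<psi> j) (\<psi> j) > 0"
  shows "n \<le> card A"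
proof (rule ccontr)
  assume "\<not> n \<le> card A"
  then have "card A < card {..<n}" by simp
  from homogeneous_system_nontrivial_solution[OF A _ this, of "\<lambda>v j. \<psi> j v"]
  obtain c where c: "\<exists>j<n. c j \<noteq> 0" and dep: "\<forall>v\<in>A. (\<Sum>j<n. \<psi> j v * c j) = 0"
    by auto
  have "c k = 0" if k: "k < n" for k
  proof -
    have "0 = inner_on A (\<psi> k) (\<lambda>v. \<Sum>j<n. c j * \<psi> j v)"
      using dep by (simp add: inner_on_def mult_ac)
    also have "\<dots> = (\<Sum>j<n. c j * inner_on A (\<psi> k) (\<psi> j))"
      by (simp add: inner_on_sum_right)
    also have "\<dots> = c k * inner_on A (\<psi> k) (\<psi> k)"
      using k orth by (subst sum.remove[of _ k]) (auto intro!: sum.neutral)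
    finally show ?thesis using nonzero[OF k] by simp
  qed
  with c show False by blast
qed

definition orthonormal_on :: "'v set \<Rightarrow> nat \<Rightarrow> (nat \<Rightarrow> 'v \<Rightarrow> real) \<Rightarrow> bool" where
  "orthonormal_on A k ph \<longleftrightarrow> (\<forall>i<k. supported_on A (ph i)) \<and>
     (\<forall>i<k. \<forall>j<k. inner_on A (ph i) (ph j) = (if i = j then 1 else 0))"

lemma orthonormal_expansion:
  assumes A: "finite A" and ph: "orthonormal_on A (card A) ph" and u: "u \<in> A"
  shows "f u = (\<Sum>i<card A. inner_on A (ph i) f * ph i u)"
proof (rule ccontr)
  let ?n = "card A"
  have oo: "inner_on A (ph i) (ph j) = (if i = j then 1 else 0)" if "i < ?n" "j < ?n" for i j
    using ph that by (simp add: orthonormal_on_def)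
  define g where "g v = f v - (\<Sum>i<?n. inner_on A (ph i) f * ph i v)" for v
  assume "f u \<noteq> (\<Sum>i<?n. inner_on A (ph i) f * ph i u)"
  then have "inner_on A g g > 0"
    by (intro inner_on_self_pos[OF A u]) (simp add: g_def)
  moreover have g_perp: "inner_on A (ph k) g = 0" if k: "k < ?n" for k
  proof -
    have "inner_on A (ph k) (\<lambda>v. \<Sum>i<?n. inner_on A (ph i) f * ph i v) = inner_on A (ph k) f"
      using k by (simp add: inner_on_sum_right oo if_distrib cong: if_cong)
    then show ?thesis
      by (simp add: g_def inner_on_def sum_subtractf right_diff_distrib)
  qed
  have "Suc ?n \<le> card A"
  proof (rule orthogonal_family_card_le[OF A, of _ "ph(?n := g)"])
    fix i j assume "i < Suc ?n" "j < Suc ?n" "i \<noteq> j"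
    then show "inner_on A ((ph(?n := g)) i) ((ph(?n := g)) j) = 0"
      by (auto simp: less_Suc_eq oo g_perp inner_on_commute[of A g])
  next
    fix j assume "j < Suc ?n"
    with \<open>inner_on A g g > 0\<close> show "inner_on A ((ph(?n := g)) j) ((ph(?n := g)) j) > 0"
      by (auto simp: less_Suc_eq oo)
  qed
  then show False by simp
qed

section \<open>Spectral theorem for the Dirichlet Laplacian\<close>

definition eigen_family :: "'v set \<Rightarrow> nat \<Rightarrow> (nat \<Rightarrow> real) \<Rightarrow> (nat \<Rightarrow> 'v \<Rightarrow> real) \<Rightarrow> bool" where
  "eigen_family A k lam ph \<longleftrightarrow>
     orthonormal_on A k ph \<and> (\<forall>i<k. \<forall>v\<in>A. glap G (ph i) v = lam i * ph i v)"

lemma is_eigenbasis_iff: "is_eigenbasis G A lam ph \<longleftrightarrow> eigen_family A (card A) lam ph"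
  unfolding eigen_family_def orthonormal_on_def is_eigenbasis_def supported_on_def inner_on_def
  by blast

definition unit_sphere_perp :: "'v set \<Rightarrow> nat \<Rightarrow> (nat \<Rightarrow> 'v \<Rightarrow> real) \<Rightarrow> ('v \<Rightarrow> real) set" where
  "unit_sphere_perp A k ph =
     {f. supported_on A f \<and> inner_on A f f = 1 \<and> (\<forall>j<k. inner_on A f (ph j) = 0)}"

lemma unit_sphere_perp_coord_bound:
  assumes A: "finite A" and f: "f \<in> unit_sphere_perp A k ph" and u: "u \<in> A"
  shows "\<bar>f u\<bar> \<le> sqrt (1 / vmeas G u)"
proof -
  have "vmeas G u * f u * f u \<le> inner_on A f f"
    unfolding inner_on_def using A u
    by (intro member_le_sum) (auto simp: mult.assoc vmeas_pos less_imp_le)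
  with f have "(f u)\<^sup>2 \<le> 1 / vmeas G u"
    using vmeas_pos[of u] by (simp add: unit_sphere_perp_def field_simps power2_eq_square)
  then show ?thesis
    using real_sqrt_le_mono by fastforce
qed

lemma closed_unit_sphere_perp: "closed (unit_sphere_perp A k ph)"
proof -
  have coord: "continuous_on UNIV (\<lambda>f::'v \<Rightarrow> real. f u)" for u
    by (rule continuous_on_subset[OF continuous_on_product_coordinates]) simp
  have inner: "continuous_on UNIV (\<lambda>f. inner_on A f (g f))" if "continuous_on UNIV g" for g
    unfolding inner_on_def
    by (intro continuous_intros coord continuous_on_product_then_coordinatewise[OF that])
  have "unit_sphere_perp A k ph = (\<Inter>u\<in>-A. {f. f u = 0}) \<inter> {f. inner_on A f f = 1} \<inter>
      (\<Inter>j\<in>{..<k}. {f. inner_on A f (ph j) = 0})"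
    by (auto simp: unit_sphere_perp_def supported_on_def)
  moreover have "closed (\<Inter>u\<in>-A. {f::'v \<Rightarrow> real. f u = 0})"
    by (intro closed_INT ballI closed_Collect_eq coord continuous_on_const)
  moreover have "closed {f. inner_on A f f = 1}"
    by (intro closed_Collect_eq inner continuous_on_id continuous_on_const)
  moreover have "closed (\<Inter>j\<in>{..<k}. {f. inner_on A f (ph j) = 0})"
    by (intro closed_INT ballI closed_Collect_eq inner continuous_on_const)
  ultimately show ?thesis by auto
qed

lemma compact_unit_sphere_perp:
  assumes A: "finite A"
  shows "compact (unit_sphere_perp A k ph)"
proof -
  define B where "B u = (if u \<in> A then {- sqrt (1 / vmeas G u) .. sqrt (1 / vmeas G u)} else {0})" for u
  have "f u \<in> B u" if "f \<in> unit_sphere_perp A k ph" for f u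
    using that unit_sphere_perp_coord_bound[OF A that, of u]
    by (auto simp: B_def abs_le_iff unit_sphere_perp_def supported_on_def)
  then have "unit_sphere_perp A k ph \<subseteq> PiE UNIV B" by auto
  moreover have "compact (PiE UNIV B)"
  proof -
    have "compactin (product_topology (\<lambda>i. euclidean) UNIV) (PiE UNIV B)"
      by (subst compactin_PiE) (auto simp: B_def)
    then show ?thesis by (simp add: euclidean_product_topology)
  qed
  ultimately show ?thesis
    using compact_Int_closed[OF _ closed_unit_sphere_perp] by (metis inf.absorb_iff2)
qed

lemma unit_sphere_perp_nonempty:
  assumes A: "finite A" and k: "k < card A"
  shows "unit_sphere_perp A k ph \<noteq> {}"
proof -
  from k have "card {..<k} < card A" by simp
  from homogeneous_system_nontrivial_solution[OF _ A this, of "\<lambda>j u. vmeas G u * ph j u"]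
  obtain c where c: "\<exists>u\<in>A. c u \<noteq> 0" "\<forall>j<k. (\<Sum>u\<in>A. vmeas G u * ph j u * c u) = 0"
    by auto
  define f0 where "f0 u = (if u \<in> A then c u else 0)" for u
  have pos: "inner_on A f0 f0 > 0"
    using c(1) A inner_on_self_pos[of A _ f0] by (auto simp: f0_def)
  define f where "f u = 1 / sqrt (inner_on A f0 f0) * f0 u" for u
  have "inner_on A f f = (1 / sqrt (inner_on A f0 f0))\<^sup>2 * inner_on A f0 f0"
    unfolding f_def by (rule inner_on_scale)
  also have "\<dots> = 1" using pos by (simp add: power_divide)
  finally have "inner_on A f f = 1" .
  moreover have "inner_on A f (ph j) = 0" if "j < k" for j
  proof -
    have "inner_on A f0 (ph j) = 0"
      using c(2) that by (simp add: inner_on_def f0_def mult_ac cong: sum.cong)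
    then show ?thesis
      unfolding f_def inner_on_scale_left by simp
  qed
  moreover have "supported_on A f" by (simp add: supported_on_def f_def f0_def)
  ultimately show ?thesis by (auto simp: unit_sphere_perp_def)
qed

lemma inner_on_glap_eigenfunction:
  assumes A: "finite A" and f: "supported_on A f" and \<psi>: "supported_on A \<psi>"
    and eigen: "\<And>v. v \<in> A \<Longrightarrow> glap G \<psi> v = \<mu> * \<psi> v"
  shows "inner_on A \<psi> (glap G f) = \<mu> * inner_on A f \<psi>"
proof -
  have "inner_on A \<psi> (glap G f) = dirichlet_form A \<psi> f"
    using green_formula[OF A f \<psi>] by (simp add: dirichlet_form_commute)
  also have "\<dots> = inner_on A f (glap G \<psi>)"
    using green_formula[OF A \<psi> f] by simp
  also have "\<dots> = inner_on A f (\<lambda>v. \<mu> * \<psi> v)"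
    using eigen by (rule inner_on_cong_right)
  finally show ?thesis by (simp add: inner_on_scale_right)
qed

lemma rayleigh_bound_of_maximizer:
  assumes max: "\<And>g. g \<in> unit_sphere_perp A k ph \<Longrightarrow> dirichlet_form A g g \<le> M"
    and A: "finite A" and g: "supported_on A g" "\<And>j. j < k \<Longrightarrow> inner_on A g (ph j) = 0"
  shows "dirichlet_form A g g \<le> M * inner_on A g g"
proof (cases "inner_on A g g = 0")
  case True
  then have "g = (\<lambda>_. 0)"
    using inner_on_self_eq_0D[OF A True] g(1) by (auto simp: supported_on_def)
  then show ?thesis by (simp add: dirichlet_form_def inner_on_def)
next
  case False
  then have pos: "inner_on A g g > 0" using inner_on_self_nonneg[of A g] by simp
  define a where "a = 1 / sqrt (inner_on A g g)"
  have a2: "a\<^sup>2 * inner_on A g g = 1" using pos by (simp add: a_def power_divide)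
  have "(\<lambda>v. a * g v) \<in> unit_sphere_perp A k ph"
    using g a2 by (simp add: unit_sphere_perp_def supported_on_def inner_on_scale inner_on_scale_left)
  from max[OF this] have "a\<^sup>2 * dirichlet_form A g g \<le> M"
    by (simp only: dirichlet_form_scale)
  then have "a\<^sup>2 * dirichlet_form A g g \<le> a\<^sup>2 * (M * inner_on A g g)"
    using a2 by (metis mult.left_commute mult_1_right)
  moreover have "a\<^sup>2 > 0" using pos by (simp add: a_def)
  ultimately show ?thesis by simp
qed

text \<open>First variation: perturbing \<open>f\<close> in the direction of the residual \<open>h = \<Delta>\<^sub>A f - M f\<close>
  would raise the Rayleigh quotient above \<open>M\<close> unless \<open>h = 0\<close>.\<close>

lemma rayleigh_extremal_is_eigenfunction:
  assumes A: "finite A" and fam: "eigen_family A k lam ph"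
    and f: "f \<in> unit_sphere_perp A k ph" and M: "M = dirichlet_form A f f"
    and rayleigh: "\<And>g. supported_on A g \<Longrightarrow> (\<And>j. j < k \<Longrightarrow> inner_on A g (ph j) = 0) \<Longrightarrow>
        dirichlet_form A g g \<le> M * inner_on A g g"
  shows "\<forall>v\<in>A. glap G f v = M * f v"
proof -
  have f_supp: "supported_on A f" and f_unit: "inner_on A f f = 1"
    and f_perp: "\<And>j. j < k \<Longrightarrow> inner_on A f (ph j) = 0"
    using f by (auto simp: unit_sphere_perp_def)
  have ph_supp: "\<And>j. j < k \<Longrightarrow> supported_on A (ph j)"
    and ph_eigen: "\<And>j v. j < k \<Longrightarrow> v \<in> A \<Longrightarrow> glap G (ph j) v = lam j * ph j v"
    using fam by (auto simp: eigen_family_def orthonormal_on_def)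
  define h where "h v = (if v \<in> A then glap G f v - M * f v else 0)" for v
  have h_supp: "supported_on A h" by (simp add: supported_on_def h_def)
  have inner_h: "inner_on A g h = inner_on A g (glap G f) - M * inner_on A g f" for g
    by (simp add: inner_on_def h_def sum_subtractf sum_distrib_left algebra_simps cong: sum.cong)
  have h_perp: "inner_on A h (ph j) = 0" if j: "j < k" for j
    using inner_h[of "ph j"] f_perp[OF j] ph_eigen[OF j]
      inner_on_glap_eigenfunction[OF A f_supp ph_supp[OF j], of "lam j"]
    by (simp add: inner_on_commute)
  define H where "H = inner_on A h h"
  have H: "H = dirichlet_form A f h - M * inner_on A f h"
    using inner_h[of h] green_formula[OF A f_supp h_supp] by (simp add: H_def inner_on_commute)
  have "H \<le> 0"
  proof (rule nonpos_of_linear_le_quadratic)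
    fix \<epsilon> :: real assume \<epsilon>: "\<epsilon> > 0"
    have "dirichlet_form A (\<lambda>v. f v + \<epsilon> * h v) (\<lambda>v. f v + \<epsilon> * h v)
        \<le> M * inner_on A (\<lambda>v. f v + \<epsilon> * h v) (\<lambda>v. f v + \<epsilon> * h v)"
      using f_supp h_supp f_perp h_perp
      by (intro rayleigh) (auto simp: supported_on_def inner_on_add_scaled_left)
    then have "M + 2 * \<epsilon> * dirichlet_form A f h + \<epsilon>\<^sup>2 * dirichlet_form A h h
        \<le> M * (1 + 2 * \<epsilon> * inner_on A f h + \<epsilon>\<^sup>2 * H)"
      unfolding dirichlet_form_add_scaled inner_on_add_scaled f_unit M H_def .
    then show "2 * \<epsilon> * H \<le> \<epsilon> * (\<epsilon> * (M * H - dirichlet_form A h h))"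
      unfolding H by (simp add: power2_eq_square algebra_simps)
  qed
  then have "\<forall>v\<in>A. h v = 0"
    using inner_on_self_eq_0D[OF A] inner_on_self_nonneg[of A h] by (simp add: H_def)
  then show ?thesis by (simp add: h_def)
qed

lemma eigen_family_extend:
  assumes A: "finite A" and fam: "eigen_family A k lam ph" and k: "k < card A"
  shows "\<exists>f M. eigen_family A (Suc k) (lam(k := M)) (ph(k := f))"
proof -
  let ?S = "unit_sphere_perp A k ph"
  have "continuous_on ?S (\<lambda>f. dirichlet_form A f f)"
  proof -
    have coord: "continuous_on ?S (\<lambda>f::'v \<Rightarrow> real. f u)" for u
      by (rule continuous_on_subset[OF continuous_on_product_coordinates]) simp
    show ?thesis unfolding dirichlet_form_def by (intro continuous_intros coord)
  qed
  with continuous_attains_sup[OF compact_unit_sphere_perp[OF A] unit_sphere_perp_nonempty[OF A k]]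
  obtain f where f: "f \<in> ?S" and max: "\<And>g. g \<in> ?S \<Longrightarrow> dirichlet_form A g g \<le> dirichlet_form A f f"
    by blast
  define M where "M = dirichlet_form A f f"
  have "\<forall>v\<in>A. glap G f v = M * f v"
    using rayleigh_bound_of_maximizer[OF max A]
    by (intro rayleigh_extremal_is_eigenfunction[OF A fam f M_def]) (auto simp: M_def)
  moreover have "supported_on A f" "inner_on A f f = 1"
    and "\<And>j. j < k \<Longrightarrow> inner_on A f (ph j) = 0" "\<And>j. j < k \<Longrightarrow> inner_on A (ph j) f = 0"
    using f by (auto simp: unit_sphere_perp_def inner_on_commute)
  ultimately have "eigen_family A (Suc k) (lam(k := M)) (ph(k := f))"
    using fam unfolding eigen_family_def orthonormal_on_def by (auto simp: less_Suc_eq)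
  then show ?thesis by blast
qed

lemma eigenbasis_exists:
  assumes A: "finite A"
  shows "\<exists>lam ph. is_eigenbasis G A lam ph"
proof -
  have "\<exists>lam ph. eigen_family A k lam ph" if "k \<le> card A" for k
    using that
  proof (induction k)
    case 0
    then show ?case by (simp add: eigen_family_def orthonormal_on_def)
  next
    case (Suc k)
    then show ?case using eigen_family_extend[OF A] by (metis Suc_leD Suc_le_lessD)
  qed
  then show ?thesis by (simp add: is_eigenbasis_iff)
qed

section \<open>The heat semigroup of the Dirichlet Laplacian\<close>

definition degree :: "'v \<Rightarrow> real" where
  "degree v = (\<Sum>e\<in>incident G v. weight e) / vmeas G v"

definition shifted_op :: "'v set \<Rightarrow> real \<Rightarrow> ('v \<Rightarrow> real) \<Rightarrow> 'v \<Rightarrow> real" where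
  "shifted_op A c f v = (if v \<in> A then c * f v - glap G f v else 0)"

definition heat_op :: "'v set \<Rightarrow> (nat \<Rightarrow> real) \<Rightarrow> (nat \<Rightarrow> 'v \<Rightarrow> real) \<Rightarrow> real \<Rightarrow> ('v \<Rightarrow> real) \<Rightarrow> 'v \<Rightarrow> real" where
  "heat_op A lam ph t f x = (\<Sum>i<card A. exp (- t * lam i) * inner_on A (ph i) f * ph i x)"

lemma degree_nonneg: "degree v \<ge> 0"
  unfolding degree_def using vmeas_pos[of v] weight_pos
  by (intro divide_nonneg_pos sum_nonneg) (auto intro: less_imp_le)

lemma degree_bounded:
  assumes "finite A"
  obtains c where "c \<ge> 0" "\<forall>v\<in>A. degree v \<le> c"
proof
  show "(\<Sum>v\<in>A. degree v) \<ge> 0" by (intro sum_nonneg degree_nonneg)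
  show "\<forall>v\<in>A. degree v \<le> (\<Sum>v\<in>A. degree v)"
    using assms degree_nonneg by (auto intro: member_le_sum)
qed

lemma glap_sum:
  assumes "finite I"
  shows "glap G (\<lambda>u. \<Sum>i\<in>I. a i * h i u) v = (\<Sum>i\<in>I. a i * glap G (h i) v)"
proof -
  have "glap G (\<lambda>u. \<Sum>i\<in>I. a i * h i u) v =
     (\<Sum>e\<in>incident G v. \<Sum>i\<in>I. a i * (cond G e * (h i v - h i (other_end G e v)) / len G e)) / vmeas G v"
    unfolding glap_def
    by (rule arg_cong[where f="\<lambda>x. x / _"], rule sum.cong[OF refl])
      (simp add: sum_subtractf[symmetric] sum_distrib_left sum_divide_distrib right_diff_distrib mult_ac)
  also have "\<dots> = (\<Sum>i\<in>I. a i * glap G (h i) v)"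
    unfolding glap_def by (simp add: sum.swap[of _ "incident G v"] sum_divide_distrib sum_distrib_left mult_ac)
  finally show ?thesis .
qed

lemma glap_eq_degree:
  "glap G f v = degree v * f v - (\<Sum>e\<in>incident G v. weight e * f (other_end G e v)) / vmeas G v"
proof -
  have "(\<Sum>e\<in>incident G v. cond G e * (f v - f (other_end G e v)) / len G e) =
      (\<Sum>e\<in>incident G v. weight e) * f v - (\<Sum>e\<in>incident G v. weight e * f (other_end G e v))"
    unfolding sum_distrib_right sum_subtractf[symmetric]
    by (rule sum.cong[OF refl]) (simp add: weight_def add_divide_distrib[symmetric] algebra_simps)
  then show ?thesis by (simp add: glap_def degree_def diff_divide_distrib)
qed

lemma shifted_op_eq:
  "v \<in> A \<Longrightarrow> shifted_op A c f v =
    (c - degree v) * f v + (\<Sum>e\<in>incident G v. weight e * f (other_end G e v)) / vmeas G v"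
  by (simp add: shifted_op_def glap_eq_degree algebra_simps)

lemma shifted_op_nonneg:
  assumes c: "\<forall>v\<in>A. degree v \<le> c" and f: "\<forall>u. f u \<ge> 0"
  shows "shifted_op A c f v \<ge> 0"
proof (cases "v \<in> A")
  case True
  have "(c - degree v) * f v \<ge> 0" using c f True by simp
  moreover have "(\<Sum>e\<in>incident G v. weight e * f (other_end G e v)) / vmeas G v \<ge> 0"
    using vmeas_pos[of v] weight_pos f
    by (intro divide_nonneg_pos sum_nonneg) (auto intro: mult_nonneg_nonneg less_imp_le)
  ultimately show ?thesis using True by (simp add: shifted_op_eq)
qed (simp add: shifted_op_def)

lemma shifted_op_mono:
  assumes AB: "A \<subseteq> B" and c: "\<forall>v\<in>B. degree v \<le> c" and fg: "\<forall>u. 0 \<le> f u \<and> f u \<le> g u"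
  shows "shifted_op A c f v \<le> shifted_op B c g v"
proof (cases "v \<in> A")
  case True
  then have v: "v \<in> B" using AB by auto
  have "(c - degree v) * f v \<le> (c - degree v) * g v"
    using c fg v by (intro mult_left_mono) auto
  moreover have "(\<Sum>e\<in>incident G v. weight e * f (other_end G e v))
      \<le> (\<Sum>e\<in>incident G v. weight e * g (other_end G e v))"
    using fg weight_pos by (intro sum_mono mult_left_mono) (auto intro: less_imp_le)
  ultimately show ?thesis
    using True v vmeas_pos[of v] by (simp add: shifted_op_eq add_mono divide_right_mono)
next
  case False
  have "\<forall>u. g u \<ge> 0" using fg by (meson order_trans)
  with False show ?thesis using shifted_op_nonneg[OF c] by (simp add: shifted_op_def)
qed

lemma shifted_op_le_const:
  assumes c: "\<forall>v\<in>A. degree v \<le> c" "c \<ge> 0" and f: "\<forall>u. 0 \<le> f u \<and> f u \<le> M"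
  shows "shifted_op A c f v \<le> c * M"
proof (cases "v \<in> A")
  case True
  have "(c - degree v) * f v \<le> (c - degree v) * M" using c f True by (intro mult_left_mono) auto
  moreover have "(\<Sum>e\<in>incident G v. weight e * f (other_end G e v)) \<le> (\<Sum>e\<in>incident G v. weight e * M)"
    using f weight_pos by (intro sum_mono mult_left_mono) (auto intro: less_imp_le)
  then have "(\<Sum>e\<in>incident G v. weight e * f (other_end G e v)) / vmeas G v \<le> degree v * M"
    using vmeas_pos[of v] by (simp add: divide_right_mono degree_def sum_distrib_right[symmetric])
  ultimately show ?thesis using True by (simp add: shifted_op_eq algebra_simps)
next
  case False
  have "M \<ge> 0" using f by (meson order_trans)
  with False c show ?thesis by (simp add: shifted_op_def)
qed

lemma shifted_op_power_nonneg:
  assumes "\<forall>v\<in>A. degree v \<le> c" and "\<forall>u. f u \<ge> 0"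
  shows "(shifted_op A c ^^ m) f v \<ge> 0"
  using assms(2) by (induction m arbitrary: v) (auto intro: shifted_op_nonneg[OF assms(1)])

lemma shifted_op_power_le:
  assumes c: "\<forall>v\<in>A. degree v \<le> c" "c \<ge> 0" and f: "\<forall>u. 0 \<le> f u \<and> f u \<le> 1"
  shows "(shifted_op A c ^^ m) f v \<le> c ^ m"
proof (induction m arbitrary: v)
  case 0
  then show ?case using f by simp
next
  case (Suc m)
  have "\<forall>u. 0 \<le> (shifted_op A c ^^ m) f u \<and> (shifted_op A c ^^ m) f u \<le> c ^ m"
    using Suc shifted_op_power_nonneg[OF c(1)] f by auto
  from shifted_op_le_const[OF c this] show ?case by simp
qed

lemma shifted_op_power_mono:
  assumes AB: "A \<subseteq> B" and c: "\<forall>v\<in>B. degree v \<le> c" and f: "\<forall>u. f u \<ge> 0"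
  shows "(shifted_op A c ^^ m) f v \<le> (shifted_op B c ^^ m) f v"
proof (induction m arbitrary: v)
  case 0
  then show ?case by simp
next
  case (Suc m)
  have "\<forall>v\<in>A. degree v \<le> c" using c AB by auto
  then have "\<forall>u. 0 \<le> (shifted_op A c ^^ m) f u \<and> (shifted_op A c ^^ m) f u \<le> (shifted_op B c ^^ m) f u"
    using Suc shifted_op_power_nonneg f by auto
  from shifted_op_mono[OF AB c this] show ?case by simp
qed

text \<open>For an eigenbasis \<open>(lam, ph)\<close> of \<open>\<Delta>\<^sub>A\<close>, \<open>diag_heat A lam ph x t\<close> is \<open>K\<^sub>A(x, x, t)\<close> and
  \<open>heat_column A lam ph x t y\<close> is \<open>K\<^sub>A(x, y, t)\<close>.\<close>

definition diag_heat :: "'v set \<Rightarrow> (nat \<Rightarrow> real) \<Rightarrow> (nat \<Rightarrow> 'v \<Rightarrow> real) \<Rightarrow> 'v \<Rightarrow> real \<Rightarrow> real" where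
  "diag_heat A lam ph x t = (\<Sum>i<card A. exp (- t * lam i) * (ph i x)\<^sup>2)"

definition diag_heat_rate :: "'v set \<Rightarrow> (nat \<Rightarrow> real) \<Rightarrow> (nat \<Rightarrow> 'v \<Rightarrow> real) \<Rightarrow> 'v \<Rightarrow> real \<Rightarrow> real" where
  "diag_heat_rate A lam ph x t = (\<Sum>i<card A. lam i * exp (- t * lam i) * (ph i x)\<^sup>2)"

definition heat_column :: "'v set \<Rightarrow> (nat \<Rightarrow> real) \<Rightarrow> (nat \<Rightarrow> 'v \<Rightarrow> real) \<Rightarrow> 'v \<Rightarrow> real \<Rightarrow> 'v \<Rightarrow> real" where
  "heat_column A lam ph x t y = (\<Sum>i<card A. (exp (- t * lam i) * ph i x) * ph i y)"

lemma diag_heat_has_derivative: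
  "(diag_heat A lam ph x has_real_derivative - diag_heat_rate A lam ph x t) (at t)"
  unfolding diag_heat_def diag_heat_rate_def
  by (auto intro!: derivative_eq_intros simp: sum_negf[symmetric] mult_ac)

lemma diag_heat_nonneg: "diag_heat A lam ph x t \<ge> 0"
  unfolding diag_heat_def by (intro sum_nonneg) simp

lemma supported_on_indicator: "B \<subseteq> A \<Longrightarrow> supported_on A (indicator B)"
  by (auto simp: supported_on_def indicator_def)

lemma inner_on_indicator:
  "finite A \<Longrightarrow> x \<in> A \<Longrightarrow> inner_on A f (indicator {x}) = vmeas G x * f x"
  by (simp add: inner_on_def indicator_def if_distrib cong: if_cong)

context
  fixes A lam ph
  assumes A: "finite A" and basis: "is_eigenbasis G A lam ph"
begin

lemma eigen_orthonormal: "orthonormal_on A (card A) ph"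
  using basis by (simp add: is_eigenbasis_iff eigen_family_def)

lemma eigen_inner: "i < card A \<Longrightarrow> j < card A \<Longrightarrow> inner_on A (ph i) (ph j) = (if i = j then 1 else 0)"
  using eigen_orthonormal by (simp add: orthonormal_on_def)

lemma eigen_vanishes: "i < card A \<Longrightarrow> v \<notin> A \<Longrightarrow> ph i v = 0"
  using eigen_orthonormal by (simp add: orthonormal_on_def supported_on_def)

lemma eigen_equation: "i < card A \<Longrightarrow> v \<in> A \<Longrightarrow> glap G (ph i) v = lam i * ph i v"
  using basis by (simp add: is_eigenbasis_def)

lemma eigen_combination_supported: "supported_on A (\<lambda>y. \<Sum>i<card A. a i * ph i y)"
  by (simp add: supported_on_def eigen_vanishes)

lemma inner_on_eigen_combination:
  "j < card A \<Longrightarrow> inner_on A (ph j) (\<lambda>y. \<Sum>i<card A. a i * ph i y) = a j"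
  by (simp add: inner_on_sum_right eigen_inner if_distrib cong: if_cong)

lemma parseval:
  "inner_on A (\<lambda>y. \<Sum>i<card A. a i * ph i y) (\<lambda>y. \<Sum>i<card A. a i * ph i y) = (\<Sum>i<card A. (a i)\<^sup>2)"
proof -
  let ?F = "\<lambda>y. \<Sum>i<card A. a i * ph i y"
  have "inner_on A ?F ?F = (\<Sum>i<card A. a i * inner_on A ?F (ph i))"
    by (rule inner_on_sum_right) simp
  also have "\<dots> = (\<Sum>i<card A. (a i)\<^sup>2)"
    by (simp add: inner_on_commute[of A ?F] inner_on_eigen_combination power2_eq_square)
  finally show ?thesis .
qed

lemma dirichlet_form_eigen_combination:
  "dirichlet_form A (\<lambda>y. \<Sum>i<card A. a i * ph i y) (\<lambda>y. \<Sum>i<card A. a i * ph i y) =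
     (\<Sum>i<card A. lam i * (a i)\<^sup>2)"
proof -
  let ?F = "\<lambda>y. \<Sum>i<card A. a i * ph i y"
  have "dirichlet_form A ?F ?F = inner_on A ?F (glap G ?F)"
    using green_formula[OF A eigen_combination_supported eigen_combination_supported] by simp
  also have "\<dots> = inner_on A ?F (\<lambda>y. \<Sum>i<card A. (a i * lam i) * ph i y)"
    by (rule inner_on_cong_right) (simp add: glap_sum eigen_equation mult_ac)
  also have "\<dots> = (\<Sum>i<card A. (a i * lam i) * inner_on A ?F (ph i))"
    by (rule inner_on_sum_right) simp
  also have "\<dots> = (\<Sum>i<card A. lam i * (a i)\<^sup>2)"
    by (simp add: inner_on_commute[of A ?F] inner_on_eigen_combination power2_eq_square mult_ac)
  finally show ?thesis .
qed

lemma eigen_expansion: "u \<in> A \<Longrightarrow> f u = (\<Sum>i<card A. inner_on A (ph i) f * ph i u)"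
  using orthonormal_expansion[OF A eigen_orthonormal] .

lemma eigen_sum_sq: "x \<in> A \<Longrightarrow> (\<Sum>i<card A. (ph i x)\<^sup>2) = 1 / vmeas G x"
  using eigen_expansion[of x "indicator {x}"] vmeas_pos[of x]
  by (simp add: inner_on_indicator[OF A] sum_distrib_left[symmetric] power2_eq_square field_simps)

lemma shifted_op_power_expansion:
  assumes f: "supported_on A f"
  shows "(shifted_op A c ^^ m) f v = (\<Sum>i<card A. (c - lam i) ^ m * inner_on A (ph i) f * ph i v)"
proof (induction m arbitrary: v)
  case 0
  show ?case
    using f eigen_expansion[of v f] eigen_vanishes by (cases "v \<in> A") (auto simp: supported_on_def)
next
  case (Suc m)
  have IH: "(shifted_op A c ^^ m) f = (\<lambda>u. \<Sum>i<card A. ((c - lam i) ^ m * inner_on A (ph i) f) * ph i u)"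
    by (rule ext) (simp add: Suc.IH)
  have "(shifted_op A c ^^ Suc m) f v =
      shifted_op A c (\<lambda>u. \<Sum>i<card A. ((c - lam i) ^ m * inner_on A (ph i) f) * ph i u) v"
    by (simp only: funpow.simps comp_apply IH)
  also have "\<dots> = (\<Sum>i<card A. (c - lam i) ^ Suc m * inner_on A (ph i) f * ph i v)"
  proof (cases "v \<in> A")
    case True
    have "glap G (\<lambda>u. \<Sum>i<card A. ((c - lam i) ^ m * inner_on A (ph i) f) * ph i u) v =
        (\<Sum>i<card A. ((c - lam i) ^ m * inner_on A (ph i) f) * glap G (ph i) v)"
      by (rule glap_sum) simp
    with True show ?thesis
      by (simp add: shifted_op_def eigen_equation sum_distrib_left sum_subtractf[symmetric]
          algebra_simps)
  qed (simp add: shifted_op_def eigen_vanishes)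
  finally show ?case .
qed

lemma heat_op_series:
  assumes f: "supported_on A f"
  shows "(\<lambda>m. t ^ m / fact m * (shifted_op A c ^^ m) f x) sums (exp (c * t) * heat_op A lam ph t f x)"
proof -
  have "(\<lambda>m. \<Sum>i<card A. (t * (c - lam i)) ^ m / fact m * (inner_on A (ph i) f * ph i x)) sums
      (\<Sum>i<card A. exp (t * (c - lam i)) * (inner_on A (ph i) f * ph i x))"
  proof (rule sums_sum)
    fix i
    have "(\<lambda>m. (t * (c - lam i)) ^ m / fact m) sums exp (t * (c - lam i))"
      using exp_converges[of "t * (c - lam i)"] by (simp add: divide_inverse_commute)
    then show "(\<lambda>m. (t * (c - lam i)) ^ m / fact m * (inner_on A (ph i) f * ph i x)) sums
        (exp (t * (c - lam i)) * (inner_on A (ph i) f * ph i x))"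
      by (rule sums_mult2)
  qed
  moreover have "(\<Sum>i<card A. exp (t * (c - lam i)) * (inner_on A (ph i) f * ph i x)) =
      exp (c * t) * heat_op A lam ph t f x"
    unfolding heat_op_def sum_distrib_left
    by (rule sum.cong[OF refl]) (simp add: right_diff_distrib exp_diff exp_minus field_simps)
  ultimately show ?thesis
    by (simp add: shifted_op_power_expansion[OF f] sum_distrib_left power_mult_distrib mult_ac)
qed

lemma heat_op_nonneg:
  assumes f: "supported_on A f" "\<forall>u. f u \<ge> 0" and t: "t \<ge> 0"
  shows "heat_op A lam ph t f x \<ge> 0"
proof -
  obtain c where c: "\<forall>v\<in>A. degree v \<le> c" using degree_bounded[OF A] by blast
  have "0 \<le> t ^ m / fact m * (shifted_op A c ^^ m) f x" for m
    using t shifted_op_power_nonneg[OF c f(2)] by simp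
  then have "0 \<le> exp (c * t) * heat_op A lam ph t f x"
    by (intro sums_le[OF _ sums_zero heat_op_series[OF f(1)]])
  then show ?thesis by (simp add: zero_le_mult_iff)
qed

lemma heat_op_le_1:
  assumes f: "supported_on A f" "\<forall>u. 0 \<le> f u \<and> f u \<le> 1" and t: "t \<ge> 0"
  shows "heat_op A lam ph t f x \<le> 1"
proof -
  obtain c where c: "\<forall>v\<in>A. degree v \<le> c" "c \<ge> 0" using degree_bounded[OF A] by blast
  have "(\<lambda>m. t ^ m / fact m * c ^ m) sums exp (c * t)"
    using exp_converges[of "c * t"] by (simp add: divide_inverse_commute power_mult_distrib mult_ac)
  moreover have "t ^ m / fact m * (shifted_op A c ^^ m) f x \<le> t ^ m / fact m * c ^ m" for m
    using t shifted_op_power_le[OF c f(2)] by (intro mult_left_mono) auto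
  ultimately have "exp (c * t) * heat_op A lam ph t f x \<le> exp (c * t)"
    by (intro sums_le[OF _ heat_op_series[OF f(1)]])
  then show ?thesis by simp
qed

lemma heat_column_eq_heat_op:
  "x \<in> A \<Longrightarrow> heat_column A lam ph x t y = heat_op A lam ph t (indicator {x}) y / vmeas G x"
  using vmeas_pos[of x]
  by (simp add: heat_column_def heat_op_def inner_on_indicator[OF A] sum_divide_distrib mult_ac)

lemma heat_column_supported: "supported_on A (heat_column A lam ph x t)"
  unfolding heat_column_def by (rule eigen_combination_supported)

lemma heat_column_nonneg:
  assumes "x \<in> A" "t \<ge> 0"
  shows "heat_column A lam ph x t y \<ge> 0"
  using assms heat_op_nonneg[OF supported_on_indicator, of "{x}" t y] vmeas_pos[of x]
  by (simp add: heat_column_eq_heat_op)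

lemma heat_column_mass_le_1:
  assumes "t \<ge> 0"
  shows "(\<Sum>y\<in>A. vmeas G y * heat_column A lam ph x t y) \<le> 1"
proof -
  have "(\<Sum>y\<in>A. vmeas G y * heat_column A lam ph x t y) = heat_op A lam ph t (indicator A) x"
    unfolding heat_column_def heat_op_def inner_on_def
    by (simp add: sum_distrib_left sum_distrib_right sum.swap[of _ A] mult_ac)
  also have "\<dots> \<le> 1"
    using assms by (intro heat_op_le_1 supported_on_indicator) auto
  finally show ?thesis .
qed

lemma inner_on_heat_column:
  "inner_on A (heat_column A lam ph x (t / 2)) (heat_column A lam ph x (t / 2)) = diag_heat A lam ph x t"
  unfolding heat_column_def parseval diag_heat_def
  by (rule sum.cong[OF refl]) (simp add: power_mult_distrib power2_eq_square mult_exp_exp)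

lemma dirichlet_form_heat_column:
  "dirichlet_form A (heat_column A lam ph x (t / 2)) (heat_column A lam ph x (t / 2)) =
     diag_heat_rate A lam ph x t"
  unfolding heat_column_def dirichlet_form_eigen_combination diag_heat_rate_def
  by (rule sum.cong[OF refl]) (simp add: power_mult_distrib power2_eq_square mult_exp_exp mult_ac)

lemma diag_heat_pos: "x \<in> A \<Longrightarrow> diag_heat A lam ph x t > 0"
proof -
  assume x: "x \<in> A"
  then have "(\<Sum>i<card A. (ph i x)\<^sup>2) \<noteq> 0" using eigen_sum_sq vmeas_pos[of x] by simp
  then obtain i where "i < card A" "ph i x \<noteq> 0"
    by (metis (mono_tags, lifting) lessThan_iff power_zero_numeral sum.neutral)
  then show ?thesis unfolding diag_heat_def by (intro sum_pos2[of _ i]) auto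
qed

lemma heat_op_indicator_diag:
  "x \<in> A \<Longrightarrow> heat_op A lam ph t (indicator {x}) x = vmeas G x * diag_heat A lam ph x t"
  by (simp add: heat_op_def diag_heat_def inner_on_indicator[OF A] sum_distrib_left
      power2_eq_square mult_ac)

lemma diag_heat_le: "x \<in> A \<Longrightarrow> t \<ge> 0 \<Longrightarrow> diag_heat A lam ph x t \<le> 1 / vmeas G x"
  using heat_op_le_1[OF supported_on_indicator, of "{x}" t x] vmeas_pos[of x]
  by (simp add: heat_op_indicator_diag field_simps)

lemma diag_heat_outside: "x \<notin> A \<Longrightarrow> diag_heat A lam ph x t = 0"
  by (simp add: diag_heat_def eigen_vanishes)

end

lemma heat_op_mono:
  assumes A: "finite A" "is_eigenbasis G A lamA phA" and B: "finite B" "is_eigenbasis G B lamB phB"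
    and AB: "A \<subseteq> B" and f: "supported_on A f" "\<forall>u. f u \<ge> 0" and t: "t \<ge> 0"
  shows "heat_op A lamA phA t f x \<le> heat_op B lamB phB t f x"
proof -
  obtain c where c: "\<forall>v\<in>B. degree v \<le> c" using degree_bounded[OF B(1)] by blast
  have fB: "supported_on B f" using f AB by (auto simp: supported_on_def)
  have "t ^ m / fact m * (shifted_op A c ^^ m) f x \<le> t ^ m / fact m * (shifted_op B c ^^ m) f x" for m
    using t shifted_op_power_mono[OF AB c f(2)] by (intro mult_left_mono) auto
  then have "exp (c * t) * heat_op A lamA phA t f x \<le> exp (c * t) * heat_op B lamB phB t f x"
    by (intro sums_le[OF _ heat_op_series[OF A f(1)] heat_op_series[OF B fB]])
  then show ?thesis by simp
qed

lemma diag_heat_mono: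
  assumes A: "finite A" "is_eigenbasis G A lamA phA" and B: "finite B" "is_eigenbasis G B lamB phB"
    and AB: "A \<subseteq> B" and t: "t \<ge> 0"
  shows "diag_heat A lamA phA x t \<le> diag_heat B lamB phB x t"
proof (cases "x \<in> A")
  case True
  have "heat_op A lamA phA t (indicator {x}) x \<le> heat_op B lamB phB t (indicator {x}) x"
    using True t by (intro heat_op_mono[OF A B AB] supported_on_indicator) auto
  with True AB vmeas_pos[of x] show ?thesis
    by (simp add: heat_op_indicator_diag[OF A] heat_op_indicator_diag[OF B] subsetD)
next
  case False
  then show ?thesis
    by (simp add: diag_heat_outside[OF A] diag_heat_nonneg)
qed

definition eigvals :: "'v set \<Rightarrow> nat \<Rightarrow> real" where
  "eigvals A = fst (SOME B. is_eigenbasis G A (fst B) (snd B))"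

definition eigfuns :: "'v set \<Rightarrow> nat \<Rightarrow> 'v \<Rightarrow> real" where
  "eigfuns A = snd (SOME B. is_eigenbasis G A (fst B) (snd B))"

lemma is_eigenbasis_eigvals_eigfuns: "finite A \<Longrightarrow> is_eigenbasis G A (eigvals A) (eigfuns A)"
  using eigenbasis_exists[of A] someI_ex[of "\<lambda>B. is_eigenbasis G A (fst B) (snd B)"]
  by (auto simp: eigvals_def eigfuns_def)

lemma heatK_fin_eq_diag_heat: "heatK_fin G A x x t = diag_heat A (eigvals A) (eigfuns A) x t"
  by (simp add: heatK_fin_def diag_heat_def eigvals_def eigfuns_def Let_def power2_eq_square mult_ac)

lemma heatK_eq_SUP:
  assumes "t \<ge> 0"
  shows "heatK G x x t = (SUP A\<in>{A. finite A \<and> A \<subseteq> - bdry G}. heatK_fin G A x x t)"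
proof -
  have "((\<lambda>A. heatK_fin G A x x t) \<longlongrightarrow> (SUP A\<in>{A. finite A \<and> A \<subseteq> - bdry G}. heatK_fin G A x x t))
      (finite_subsets_at_top (- bdry G))"
  proof (rule tendsto_SUP_finite_subsets_mono)
    show "heatK_fin G A x x t \<le> heatK_fin G B x x t" if "finite B" "A \<subseteq> B" for A B
      using that assms finite_subset[OF that(2,1)] is_eigenbasis_eigvals_eigfuns
      by (simp add: heatK_fin_eq_diag_heat diag_heat_mono)
    show "heatK_fin G A x x t \<le> 1 / vmeas G x" if "finite A" for A
      using that assms is_eigenbasis_eigvals_eigfuns[OF that] vmeas_pos[of x]
      by (cases "x \<in> A") (simp_all add: heatK_fin_eq_diag_heat diag_heat_le diag_heat_outside)
  qed
  then show ?thesis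
    unfolding heatK_def by (rule tendsto_Lim[rotated]) simp
qed

section \<open>Superlevel sets of edgewise linear functions\<close>

definition interp :: "('v \<Rightarrow> real) \<Rightarrow> 'e \<Rightarrow> real \<Rightarrow> real" where
  "interp g e r = g (end1 e) + (g (end2 e) - g (end1 e)) * r / len G e"

definition superlevel :: "('v \<Rightarrow> real) \<Rightarrow> real \<Rightarrow> ('v, 'e) gpoint set" where
  "superlevel g \<tau> = {Vx v | v. g v > \<tau>} \<union> {Ept e r | e r. 0 < r \<and> r < len G e \<and> interp g e r > \<tau>}"

definition crossing_edges :: "'v set \<Rightarrow> ('v \<Rightarrow> real) \<Rightarrow> real \<Rightarrow> 'e set" where
  "crossing_edges A g \<tau> =
     {e \<in> edges_at A. min (g (end1 e)) (g (end2 e)) < \<tau> \<and> \<tau> < max (g (end1 e)) (g (end2 e))}"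

lemma Vx_in_superlevel: "Vx v \<in> superlevel g \<tau> \<longleftrightarrow> g v > \<tau>"
  by (auto simp: superlevel_def)

lemma Ept_in_superlevel:
  "Ept e r \<in> superlevel g \<tau> \<longleftrightarrow> 0 < r \<and> r < len G e \<and> interp g e r > \<tau>"
  by (auto simp: superlevel_def)

lemma interp_dist:
  "\<bar>interp g e r' - interp g e r\<bar> = \<bar>g (end1 e) - g (end2 e)\<bar> / len G e * \<bar>r' - r\<bar>"
proof -
  have "interp g e r' - interp g e r = (g (end2 e) - g (end1 e)) * (r' - r) / len G e"
    using len_pos[of e] by (simp add: interp_def field_simps)
  then show ?thesis
    using len_pos[of e] by (simp add: abs_mult abs_minus_commute)
qed

lemma interp_endpoints: "interp g e 0 = g (end1 e)" "interp g e (len G e) = g (end2 e)"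
  using len_pos[of e] by (simp_all add: interp_def)

lemma interp_near_end:
  assumes "near_end G e v \<epsilon> r"
  shows "e \<in> incident G v \<and> \<bar>interp g e r - g v\<bar> \<le> \<bar>g (end1 e) - g (end2 e)\<bar> / len G e * \<epsilon>"
proof -
  let ?L = "\<bar>g (end1 e) - g (end2 e)\<bar> / len G e"
  have L: "?L \<ge> 0" using len_pos[of e] by simp
  from assms have r: "0 < r" "r < len G e"
    and near: "(end1 e = v \<and> r < \<epsilon>) \<or> (end2 e = v \<and> len G e - r < \<epsilon>)"
    by (auto simp: near_end_def)
  from near have "\<bar>interp g e r - g v\<bar> \<le> ?L * \<epsilon>"
  proof
    assume near1: "end1 e = v \<and> r < \<epsilon>"
    then have "\<bar>interp g e r - g v\<bar> = ?L * r"
      using interp_dist[of g e r 0] r by (simp add: interp_endpoints)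
    also have "\<dots> \<le> ?L * \<epsilon>" using near1 L by (intro mult_left_mono) auto
    finally show ?thesis .
  next
    assume near2: "end2 e = v \<and> len G e - r < \<epsilon>"
    then have "\<bar>interp g e r - g v\<bar> = ?L * (len G e - r)"
      using interp_dist[of g e r "len G e"] r by (simp add: interp_endpoints)
    also have "\<dots> \<le> ?L * \<epsilon>" using near2 L by (intro mult_left_mono) auto
    finally show ?thesis .
  qed
  moreover have "e \<in> incident G v" using near by (auto simp: incident_iff)
  ultimately show ?thesis by simp
qed

lemma interp_near_vertex:
  assumes "\<delta> > 0"
  shows "\<exists>\<epsilon>>0. \<forall>e r. near_end G e v \<epsilon> r \<longrightarrow> \<bar>interp g e r - g v\<bar> < \<delta>"
proof -
  define D where "D = (\<Sum>e\<in>incident G v. \<bar>g (end1 e) - g (end2 e)\<bar> / len G e)"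
  have D: "D \<ge> 0" unfolding D_def using len_pos by (intro sum_nonneg) (simp add: less_imp_le)
  define \<epsilon> where "\<epsilon> = \<delta> / (1 + D)"
  have \<epsilon>: "\<epsilon> > 0" using assms D by (simp add: \<epsilon>_def)
  have "\<bar>interp g e r - g v\<bar> < \<delta>" if near: "near_end G e v \<epsilon> r" for e r
  proof -
    from interp_near_end[OF near, of g] have e: "e \<in> incident G v"
      and est: "\<bar>interp g e r - g v\<bar> \<le> \<bar>g (end1 e) - g (end2 e)\<bar> / len G e * \<epsilon>" by auto
    have "\<bar>g (end1 e) - g (end2 e)\<bar> / len G e \<le> D"
      unfolding D_def using e finite_incident len_pos
      by (intro member_le_sum) (auto simp: less_imp_le)
    then have "\<bar>g (end1 e) - g (end2 e)\<bar> / len G e * \<epsilon> \<le> D * \<epsilon>"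
      using \<epsilon> by (intro mult_right_mono) auto
    also have "D * \<epsilon> < \<delta>" using assms D by (simp add: \<epsilon>_def field_simps)
    finally show ?thesis using est by linarith
  qed
  with \<epsilon> show ?thesis by blast
qed

lemma interp_near_point:
  assumes "\<delta> > 0"
  shows "\<exists>\<epsilon>>0. \<forall>r'. \<bar>r' - r\<bar> < \<epsilon> \<longrightarrow> \<bar>interp g e r' - interp g e r\<bar> < \<delta>"
proof -
  define L where "L = \<bar>g (end1 e) - g (end2 e)\<bar> / len G e"
  have L: "L \<ge> 0" using len_pos[of e] by (simp add: L_def)
  define \<epsilon> where "\<epsilon> = \<delta> / (1 + L)"
  have "\<bar>interp g e r' - interp g e r\<bar> < \<delta>" if "\<bar>r' - r\<bar> < \<epsilon>" for r'
  proof -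
    have "\<bar>interp g e r' - interp g e r\<bar> \<le> L * \<epsilon>"
      using that L by (simp add: interp_dist L_def[symmetric] mult_left_mono)
    also have "\<dots> < \<delta>" using assms L by (simp add: \<epsilon>_def field_simps)
    finally show ?thesis .
  qed
  moreover have "\<epsilon> > 0" using assms L by (simp add: \<epsilon>_def)
  ultimately show ?thesis by blast
qed

lemma gopen_superlevel: "gopen G (superlevel g \<tau>)"
  unfolding gopen_def
proof (intro conjI ballI)
  show "superlevel g \<tau> \<subseteq> points G" by (auto simp: superlevel_def points_def)
next
  fix p assume p: "p \<in> superlevel g \<tau>"
  show "\<exists>\<epsilon>>0. nbhd G p \<epsilon> \<subseteq> superlevel g \<tau>"
  proof (cases p)
    case (Vx v)
    then have "g v > \<tau>" using p by (simp add: Vx_in_superlevel)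
    with interp_near_vertex[of "g v - \<tau>" v g] obtain \<epsilon> where
      "\<epsilon> > 0" "\<forall>e r. near_end G e v \<epsilon> r \<longrightarrow> \<bar>interp g e r - g v\<bar> < g v - \<tau>"
      by auto
    with \<open>g v > \<tau>\<close> show ?thesis
      by (intro exI[of _ \<epsilon>]) (auto simp: Vx Vx_in_superlevel Ept_in_superlevel near_end_def abs_less_iff)
  next
    case (Ept e r)
    then have "0 < r" "r < len G e" "interp g e r > \<tau>" using p by (auto simp: Ept_in_superlevel)
    with interp_near_point[of "interp g e r - \<tau>" r g e] obtain \<epsilon> where
      "\<epsilon> > 0" "\<forall>r'. \<bar>r' - r\<bar> < \<epsilon> \<longrightarrow> \<bar>interp g e r' - interp g e r\<bar> < interp g e r - \<tau>"
      by auto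
    then show ?thesis
      by (intro exI[of _ \<epsilon>]) (auto simp: Ept Ept_in_superlevel abs_less_iff)
  qed
qed

text \<open>A vertex off the level \<open>\<tau>\<close> has a whole neighbourhood on one side of it.\<close>

lemma gboundary_superlevel:
  assumes no_vertex: "\<forall>v. g v \<noteq> \<tau>" and p: "p \<in> gboundary G (superlevel g \<tau>)"
  shows "\<exists>e r. p = Ept e r \<and> 0 < r \<and> r < len G e \<and> interp g e r = \<tau>"
proof -
  from p have p_pt: "p \<in> points G" "p \<notin> superlevel g \<tau>"
    and touch: "\<forall>\<epsilon>>0. nbhd G p \<epsilon> \<inter> superlevel g \<tau> \<noteq> {}"
    by (auto simp: gboundary_def)
  show ?thesis
  proof (cases p)
    case (Vx v)
    then have "g v < \<tau>" using p_pt no_vertex[rule_format, of v] by (auto simp: Vx_in_superlevel)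
    with interp_near_vertex[of "\<tau> - g v" v g] obtain \<epsilon> where
      "\<epsilon> > 0" "\<forall>e r. near_end G e v \<epsilon> r \<longrightarrow> \<bar>interp g e r - g v\<bar> < \<tau> - g v"
      by auto
    moreover from this \<open>g v < \<tau>\<close> have "nbhd G (Vx v) \<epsilon> \<inter> superlevel g \<tau> = {}"
      by (fastforce simp: Vx_in_superlevel Ept_in_superlevel abs_less_iff)
    ultimately show ?thesis using touch Vx by blast
  next
    case (Ept e r)
    then have r: "0 < r" "r < len G e" and le: "interp g e r \<le> \<tau>"
      using p_pt by (auto simp: points_def Ept_in_superlevel)
    have "\<not> interp g e r < \<tau>"
    proof
      assume "interp g e r < \<tau>"
      with interp_near_point[of "\<tau> - interp g e r" r g e] obtain \<epsilon> where
        "\<epsilon> > 0" "\<forall>r'. \<bar>r' - r\<bar> < \<epsilon> \<longrightarrow> \<bar>interp g e r' - interp g e r\<bar> < \<tau> - interp g e r"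
        by auto
      moreover from this have "nbhd G (Ept e r) \<epsilon> \<inter> superlevel g \<tau> = {}"
        by (fastforce simp: Ept_in_superlevel abs_less_iff)
      ultimately show False using touch Ept by blast
    qed
    with Ept r le show ?thesis by auto
  qed
qed

lemma level_crossing:
  assumes r: "0 < r" "r < len G e" and level: "interp g e r = \<tau>"
    and "g (end1 e) \<noteq> \<tau>" "g (end2 e) \<noteq> \<tau>"
  shows "min (g (end1 e)) (g (end2 e)) < \<tau> \<and> \<tau> < max (g (end1 e)) (g (end2 e))"
proof -
  define s where "s = r / len G e"
  have s: "0 < s" "s < 1" using r len_pos[of e] by (auto simp: s_def field_simps)
  have "interp g e r = g (end1 e) + (g (end2 e) - g (end1 e)) * s"
    by (simp add: interp_def s_def)
  then have convex: "(1 - s) * (g (end1 e) - \<tau>) + s * (g (end2 e) - \<tau>) = 0"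
    using level by (simp add: algebra_simps)
  have "\<not> (g (end1 e) < \<tau> \<and> g (end2 e) < \<tau>)"
  proof
    assume "g (end1 e) < \<tau> \<and> g (end2 e) < \<tau>"
    then have "(1 - s) * (g (end1 e) - \<tau>) < 0" "s * (g (end2 e) - \<tau>) < 0"
      using s by (auto intro: mult_pos_neg)
    with convex show False by linarith
  qed
  moreover have "\<not> (g (end1 e) > \<tau> \<and> g (end2 e) > \<tau>)"
  proof
    assume "g (end1 e) > \<tau> \<and> g (end2 e) > \<tau>"
    then have "(1 - s) * (g (end1 e) - \<tau>) > 0" "s * (g (end2 e) - \<tau>) > 0"
      using s by auto
    with convex show False by linarith
  qed
  ultimately
  show ?thesis using assms by linarith
qed

lemma gpoint_edge_gboundary_superlevel:
  assumes A: "finite A" and g: "supported_on A g" and \<tau>: "\<tau> > 0" and no_vertex: "\<forall>v. g v \<noteq> \<tau>"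
  shows "gpoint_edge ` gboundary G (superlevel g \<tau>) \<subseteq> crossing_edges A g \<tau>"
proof
  fix e assume "e \<in> gpoint_edge ` gboundary G (superlevel g \<tau>)"
  then obtain p where p: "p \<in> gboundary G (superlevel g \<tau>)" "e = gpoint_edge p" by blast
  obtain e' r where "p = Ept e' r" "0 < r" "r < len G e'" "interp g e' r = \<tau>"
    using gboundary_superlevel[OF no_vertex p(1)] by blast
  with p(2) have "0 < r" "r < len G e" "interp g e r = \<tau>" by simp_all
  from level_crossing[OF this] no_vertex
  have cross: "min (g (end1 e)) (g (end2 e)) < \<tau> \<and> \<tau> < max (g (end1 e)) (g (end2 e))" by blast
  then have "g (end1 e) \<noteq> 0 \<or> g (end2 e) \<noteq> 0"
    using \<tau> by (auto simp: less_max_iff_disj)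
  then have "end1 e \<in> A \<or> end2 e \<in> A"
    using g by (auto simp: supported_on_def)
  with cross show "e \<in> crossing_edges A g \<tau>"
    by (auto simp: crossing_edges_def edges_at_def incident_iff)
qed

lemma inj_on_gpoint_edge_gboundary_superlevel:
  assumes no_vertex: "\<forall>v. g v \<noteq> \<tau>"
  shows "inj_on gpoint_edge (gboundary G (superlevel g \<tau>))"
proof
  fix p q assume p: "p \<in> gboundary G (superlevel g \<tau>)" and q: "q \<in> gboundary G (superlevel g \<tau>)"
    and same_edge: "gpoint_edge p = gpoint_edge q"
  obtain e r where p': "p = Ept e r" "0 < r" "r < len G e" "interp g e r = \<tau>"
    using gboundary_superlevel[OF no_vertex p] by blast
  obtain e' r' where q': "q = Ept e' r'" "interp g e' r' = \<tau>"
    using gboundary_superlevel[OF no_vertex q] by blast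
  from same_edge p' q' have q'': "q = Ept e r'" "interp g e r' = \<tau>" by simp_all
  from level_crossing[OF p'(2-4)] no_vertex have "g (end1 e) \<noteq> g (end2 e)" by auto
  with p'(4) q''(2) interp_dist[of g e r' r] len_pos[of e] show "p = q" by (simp add: p'(1) q''(1))
qed

lemma superlevel_boundary:
  assumes A: "finite A" and g: "supported_on A g" and \<tau>: "\<tau> > 0" and no_vertex: "\<forall>v. g v \<noteq> \<tau>"
  shows "finite (gboundary G (superlevel g \<tau>))"
    and "boundary_area G (superlevel g \<tau>) \<le> (\<Sum>e\<in>crossing_edges A g \<tau>. cond G e)"
proof -
  let ?B = "gboundary G (superlevel g \<tau>)"
  note image = gpoint_edge_gboundary_superlevel[OF assms]
  note inj = inj_on_gpoint_edge_gboundary_superlevel[OF no_vertex]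
  have fin: "finite (crossing_edges A g \<tau>)"
    using finite_edges_at[OF A] by (simp add: crossing_edges_def)
  show "finite ?B"
    using finite_imageD[OF finite_subset[OF image fin] inj] .
  have edge_points: "\<exists>e r. p = Ept e r" if "p \<in> ?B" for p
    using gboundary_superlevel[OF no_vertex that] by blast
  have "boundary_area G (superlevel g \<tau>) = (\<Sum>p\<in>?B. cond G (gpoint_edge p))"
  proof -
    have "{v. Vx v \<in> ?B} = {}" "{p \<in> ?B. p \<notin> range Vx} = ?B" using edge_points by blast+
    moreover have "(case p of Ept e s \<Rightarrow> cond G e | Vx v \<Rightarrow> 0) = cond G (gpoint_edge p)" if "p \<in> ?B" for p
      using edge_points[OF that] by auto
    ultimately show ?thesis unfolding boundary_area_def by simp
  qed
  also have "\<dots> = (\<Sum>e\<in>gpoint_edge ` ?B. cond G e)" by (simp add: sum.reindex[OF inj])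
  also have "\<dots> \<le> (\<Sum>e\<in>crossing_edges A g \<tau>. cond G e)"
    using fin image cond_pos by (intro sum_mono2) (auto intro: less_imp_le)
  finally show "boundary_area G (superlevel g \<tau>) \<le> (\<Sum>e\<in>crossing_edges A g \<tau>. cond G e)" .
qed

section \<open>Coarea estimates\<close>

text \<open>\<open>rho_le r\<close> says \<open>\<rho>\<^sub>s\<^sub>u\<^sub>p \<le> r\<close>, stated without extended reals.\<close>

definition rho_le :: "real \<Rightarrow> bool" where
  "rho_le r \<longleftrightarrow> (\<forall>v. (\<Sum>e\<in>incident G v. cond G e * len G e) \<le> 2 * r * vmeas G v)"

lemma rho_le_rho_sup:
  assumes "rho_sup G = ennreal r" "r \<ge> 0"
  shows "rho_le r"
  unfolding rho_le_def
proof
  fix v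
  have "ennreal ((\<Sum>e\<in>incident G v. cond G e * len G e / 2) / vmeas G v) \<le> rho_sup G"
    unfolding rho_sup_def by (rule SUP_upper) simp
  then have "(\<Sum>e\<in>incident G v. cond G e * len G e / 2) / vmeas G v \<le> r"
    using assms by simp
  then show "(\<Sum>e\<in>incident G v. cond G e * len G e) \<le> 2 * r * vmeas G v"
    using vmeas_pos[of v] by (simp add: sum_divide_distrib[symmetric] divide_le_eq)
qed

lemma sum_edges_endpoint_le:
  assumes A: "finite A" and g: "supported_on A g" and endpoint: "\<And>e. e \<in> incident G (pe e)"
    and c: "\<And>e. c e \<ge> 0"
  shows "(\<Sum>e\<in>edges_at A. c e * (g (pe e))\<^sup>2) \<le> (\<Sum>v\<in>A. (g v)\<^sup>2 * (\<Sum>e\<in>incident G v. c e))"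
proof -
  have "(\<Sum>e\<in>edges_at A. c e * (g (pe e))\<^sup>2) = (\<Sum>e\<in>edges_at A. \<Sum>v\<in>A. if pe e = v then c e * (g v)\<^sup>2 else 0)"
    using A g by (intro sum.cong) (auto simp: supported_on_def)
  also have "\<dots> = (\<Sum>v\<in>A. \<Sum>e\<in>{e\<in>edges_at A. pe e = v}. c e * (g v)\<^sup>2)"
    using finite_edges_at[OF A] by (simp add: sum.swap[of _ "edges_at A"] sum.inter_filter)
  also have "\<dots> \<le> (\<Sum>v\<in>A. \<Sum>e\<in>incident G v. c e * (g v)\<^sup>2)"
    using endpoint c finite_incident by (intro sum_mono sum_mono2) auto
  also have "\<dots> = (\<Sum>v\<in>A. (g v)\<^sup>2 * (\<Sum>e\<in>incident G v. c e))"
    by (simp add: sum_distrib_right mult_ac)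
  finally show ?thesis .
qed

lemma sum_edges_endpoint_sum_sq_le:
  assumes A: "finite A" and g: "supported_on A g" and r: "rho_le r"
  shows "(\<Sum>e\<in>edges_at A. cond G e * len G e * (g (end1 e) + g (end2 e))\<^sup>2) \<le> 8 * r * inner_on A g g"
proof -
  have cl: "cond G e * len G e \<ge> 0" for e using cond_pos len_pos by (simp add: less_imp_le)
  have "(\<Sum>e\<in>edges_at A. cond G e * len G e * (g (end1 e) + g (end2 e))\<^sup>2) \<le>
      (\<Sum>e\<in>edges_at A. 2 * (cond G e * len G e * (g (end1 e))\<^sup>2) + 2 * (cond G e * len G e * (g (end2 e))\<^sup>2))"
  proof (rule sum_mono)
    fix e
    have "(g (end1 e) + g (end2 e))\<^sup>2 \<le> 2 * (g (end1 e))\<^sup>2 + 2 * (g (end2 e))\<^sup>2"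
      using sum_squares_bound[of "g (end1 e)" "g (end2 e)"] by (simp add: power2_eq_square algebra_simps)
    from mult_left_mono[OF this cl[of e]]
    show "cond G e * len G e * (g (end1 e) + g (end2 e))\<^sup>2 \<le>
        2 * (cond G e * len G e * (g (end1 e))\<^sup>2) + 2 * (cond G e * len G e * (g (end2 e))\<^sup>2)"
      by (simp add: algebra_simps)
  qed
  also have "\<dots> \<le> 2 * (\<Sum>v\<in>A. (g v)\<^sup>2 * (\<Sum>e\<in>incident G v. cond G e * len G e))
      + 2 * (\<Sum>v\<in>A. (g v)\<^sup>2 * (\<Sum>e\<in>incident G v. cond G e * len G e))"
    using sum_edges_endpoint_le[OF A g, of end1 "\<lambda>e. cond G e * len G e"]
      sum_edges_endpoint_le[OF A g, of end2 "\<lambda>e. cond G e * len G e"] cl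
    by (simp add: sum.distrib sum_distrib_left[symmetric] incident_iff)
  also have "\<dots> \<le> 2 * (\<Sum>v\<in>A. (g v)\<^sup>2 * (2 * r * vmeas G v)) + 2 * (\<Sum>v\<in>A. (g v)\<^sup>2 * (2 * r * vmeas G v))"
    using r by (intro add_mono mult_left_mono sum_mono) (auto simp: rho_le_def)
  also have "\<dots> = 8 * r * inner_on A g g"
    by (simp add: inner_on_def sum_distrib_left power2_eq_square mult_ac)
  finally show ?thesis .
qed

lemma sum_edges_diff_sq_le:
  assumes A: "finite A" and g: "supported_on A g" "\<forall>u. g u \<ge> 0" and \<theta>: "\<theta> > 0" and r: "rho_le r"
  shows "(\<Sum>e\<in>edges_at A. cond G e * \<bar>(g (end1 e))\<^sup>2 - (g (end2 e))\<^sup>2\<bar>)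
    \<le> \<theta> / 2 * dirichlet_form A g g + 1 / (2 * \<theta>) * (8 * r * inner_on A g g)"
proof -
  have "(\<Sum>e\<in>edges_at A. cond G e * \<bar>(g (end1 e))\<^sup>2 - (g (end2 e))\<^sup>2\<bar>) \<le>
     (\<Sum>e\<in>edges_at A. \<theta> / 2 * (weight e * (g (end1 e) - g (end2 e)) * (g (end1 e) - g (end2 e)))
       + 1 / (2 * \<theta>) * (cond G e * len G e * (g (end1 e) + g (end2 e))\<^sup>2))"
  proof (rule sum_mono)
    fix e
    have "(g (end1 e))\<^sup>2 - (g (end2 e))\<^sup>2 = (g (end1 e) - g (end2 e)) * (g (end1 e) + g (end2 e))"
      by (simp add: power2_eq_square algebra_simps)
    then have "\<bar>(g (end1 e))\<^sup>2 - (g (end2 e))\<^sup>2\<bar> = \<bar>g (end1 e) - g (end2 e)\<bar> * (g (end1 e) + g (end2 e))"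
      using g(2) by (simp add: abs_mult)
    moreover have "g (end1 e) + g (end2 e) \<ge> 0" using g(2) by simp
    note weighted_amgm[OF cond_pos[of e] len_pos[of e] \<theta> this, of "g (end1 e) - g (end2 e)"]
    ultimately show "cond G e * \<bar>(g (end1 e))\<^sup>2 - (g (end2 e))\<^sup>2\<bar> \<le>
        \<theta> / 2 * (weight e * (g (end1 e) - g (end2 e)) * (g (end1 e) - g (end2 e)))
        + 1 / (2 * \<theta>) * (cond G e * len G e * (g (end1 e) + g (end2 e))\<^sup>2)"
      by (simp add: weight_def power2_eq_square mult_ac)
  qed
  also have "\<dots> = \<theta> / 2 * dirichlet_form A g g
      + 1 / (2 * \<theta>) * (\<Sum>e\<in>edges_at A. cond G e * len G e * (g (end1 e) + g (end2 e))\<^sup>2)"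
    by (simp add: dirichlet_form_def sum.distrib sum_distrib_left)
  also have "\<dots> \<le> \<theta> / 2 * dirichlet_form A g g + 1 / (2 * \<theta>) * (8 * r * inner_on A g g)"
    using sum_edges_endpoint_sum_sq_le[OF A g(1) r] \<theta> by (intro add_left_mono mult_left_mono) auto
  finally show ?thesis .
qed

definition level_volume :: "'v set \<Rightarrow> ('v \<Rightarrow> real) \<Rightarrow> real \<Rightarrow> real" where
  "level_volume A g s = (\<Sum>v\<in>A. vmeas G v * indicator {0<..<(g v)\<^sup>2} s)"

definition level_area :: "'v set \<Rightarrow> ('v \<Rightarrow> real) \<Rightarrow> real \<Rightarrow> real" where
  "level_area A g s = (\<Sum>e\<in>edges_at A. cond G e *
     indicator {min ((g (end1 e))\<^sup>2) ((g (end2 e))\<^sup>2)<..<max ((g (end1 e))\<^sup>2) ((g (end2 e))\<^sup>2)} s)"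

lemma level_volume_integral:
  "integrable lborel (level_volume A g)" "integral\<^sup>L lborel (level_volume A g) = inner_on A g g"
  unfolding level_volume_def inner_on_def
  by (auto simp: power2_eq_square mult_ac)

lemma level_area_integral:
  "integrable lborel (level_area A g)"
  "integral\<^sup>L lborel (level_area A g) = (\<Sum>e\<in>edges_at A. cond G e * \<bar>(g (end1 e))\<^sup>2 - (g (end2 e))\<^sup>2\<bar>)"
  unfolding level_area_def
  by (auto simp: abs_if min_def max_def intro!: sum.cong)

lemma level_volume_eq_superlevel:
  assumes A: "finite A" and g: "supported_on A g" "\<forall>u. g u \<ge> 0" and s: "s > 0"
  shows "level_volume A g s = (\<Sum>v | g v > sqrt s. vmeas G v)"
proof -
  have UA: "{v. g v > sqrt s} \<subseteq> A" using g s by (auto simp: supported_on_def)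
  have "s < (g v)\<^sup>2 \<longleftrightarrow> sqrt s < g v" for v
    using g(2) s by (metis abs_of_nonneg real_sqrt_abs real_sqrt_less_iff)
  then have "level_volume A g s = (\<Sum>v\<in>A. if g v > sqrt s then vmeas G v else 0)"
    unfolding level_volume_def using s by (intro sum.cong) (auto simp: indicator_def)
  also have "\<dots> = (\<Sum>v | g v > sqrt s. vmeas G v)"
    using A UA by (simp add: sum.If_cases Int_absorb1)
  finally show ?thesis .
qed

lemma level_area_eq_crossing:
  assumes A: "finite A" and g: "\<forall>u. g u \<ge> 0" and s: "s > 0"
  shows "level_area A g s = (\<Sum>e\<in>crossing_edges A g (sqrt s). cond G e)"
proof -
  have "(g v)\<^sup>2 < s \<longleftrightarrow> g v < sqrt s" "s < (g v)\<^sup>2 \<longleftrightarrow> sqrt s < g v" for v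
    using g s by (metis abs_of_nonneg real_sqrt_abs real_sqrt_less_iff)+
  then have "level_area A g s = (\<Sum>e\<in>edges_at A. if min (g (end1 e)) (g (end2 e)) < sqrt s
      \<and> sqrt s < max (g (end1 e)) (g (end2 e)) then cond G e else 0)"
    unfolding level_area_def by (intro sum.cong) (auto simp: indicator_def min_less_iff_disj less_max_iff_disj)
  also have "\<dots> = (\<Sum>e\<in>crossing_edges A g (sqrt s). cond G e)"
    using finite_edges_at[OF A] by (simp add: crossing_edges_def sum.inter_filter)
  finally show ?thesis .
qed

lemma dirichlet_form_truncation_le:
  "dirichlet_form A (\<lambda>u. max (f u - s) 0) (\<lambda>u. max (f u - s) 0) \<le> dirichlet_form A f f"
  unfolding dirichlet_form_def
proof (rule sum_mono)
  fix e
  have "\<bar>max (f (end1 e) - s) 0 - max (f (end2 e) - s) 0\<bar> \<le> \<bar>f (end1 e) - f (end2 e)\<bar>" by simp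
  then have "(max (f (end1 e) - s) 0 - max (f (end2 e) - s) 0)\<^sup>2 \<le> (f (end1 e) - f (end2 e))\<^sup>2"
    by (metis abs_ge_zero power2_abs power_mono)
  then show "weight e * (max (f (end1 e) - s) 0 - max (f (end2 e) - s) 0) * (max (f (end1 e) - s) 0 - max (f (end2 e) - s) 0)
      \<le> weight e * (f (end1 e) - f (end2 e)) * (f (end1 e) - f (end2 e))"
    using weight_pos[of e] by (simp add: power2_eq_square mult.assoc mult_left_mono)
qed

lemma inner_on_truncation_ge:
  assumes f: "\<forall>u. f u \<ge> 0" and s: "s \<ge> 0"
  shows "inner_on A f f - 2 * s * (\<Sum>u\<in>A. vmeas G u * f u)
    \<le> inner_on A (\<lambda>u. max (f u - s) 0) (\<lambda>u. max (f u - s) 0)"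
proof -
  have "(f u)\<^sup>2 - 2 * s * f u \<le> (max (f u - s) 0)\<^sup>2" for u
  proof (cases "f u \<ge> s")
    case True
    then show ?thesis by (simp add: power2_eq_square algebra_simps)
  next
    case False
    then have "f u * (f u - 2 * s) \<le> 0" using f s by (intro mult_nonneg_nonpos) auto
    moreover have "max (f u - s) 0 = 0" using False by simp
    ultimately show ?thesis by (simp add: power2_eq_square algebra_simps)
  qed
  then have "(\<Sum>u\<in>A. vmeas G u * ((f u)\<^sup>2 - 2 * s * f u)) \<le> inner_on A (\<lambda>u. max (f u - s) 0) (\<lambda>u. max (f u - s) 0)"
    unfolding inner_on_def using vmeas_pos
    by (intro sum_mono) (simp add: mult.assoc power2_eq_square mult_left_mono less_imp_le)
  then show ?thesis
    by (simp add: inner_on_def sum_subtractf sum_distrib_left algebra_simps power2_eq_square)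
qed

lemma truncation_support_measure_le:
  assumes A: "finite A" and f: "\<forall>u. f u \<ge> 0" and s: "s > 0"
  shows "(\<Sum>v | v \<in> A \<and> max (f v - s) 0 \<noteq> 0. vmeas G v) \<le> (\<Sum>u\<in>A. vmeas G u * f u) / s"
proof -
  have "(\<Sum>v | v \<in> A \<and> max (f v - s) 0 \<noteq> 0. vmeas G v) \<le> (\<Sum>v | v \<in> A \<and> max (f v - s) 0 \<noteq> 0. vmeas G v * f v / s)"
  proof (rule sum_mono)
    fix v assume "v \<in> {v. v \<in> A \<and> max (f v - s) 0 \<noteq> 0}"
    then have "f v / s \<ge> 1" using s by (simp add: max_def split: if_splits)
    then show "vmeas G v \<le> vmeas G v * f v / s"
      using vmeas_pos[of v] by (metis mult.right_neutral mult_left_mono less_imp_le times_divide_eq_right)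
  qed
  also have "\<dots> \<le> (\<Sum>u\<in>A. vmeas G u * f u / s)"
    using A f s vmeas_pos by (intro sum_mono2) (auto intro!: divide_nonneg_nonneg mult_nonneg_nonneg simp: less_imp_le)
  also have "\<dots> = (\<Sum>u\<in>A. vmeas G u * f u) / s" by (simp add: sum_divide_distrib)
  finally show ?thesis .
qed

end

section \<open>Faber-Krahn and Nash inequalities\<close>

locale isoperimetric_graph = locfin_graph +
  fixes \<phi> :: "real \<Rightarrow> real"
  assumes phi_pos: "\<forall>x>0. \<phi> x > 0" and phi_mono: "mono_on {0<..} \<phi>"
    and isoperimetric: "\<forall>\<Omega>. admissible G \<Omega> \<and> vmeas G summable_on {v. Vx v \<in> \<Omega>} \<and> vol G \<Omega> > 0
              \<longrightarrow> boundary_area G \<Omega> \<ge> vol G \<Omega> / \<phi> (vol G \<Omega>)"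
begin

lemma isoperimetric_superlevel:
  assumes A: "finite A" "A \<inter> bdry G = {}" and g: "supported_on A g"
    and \<tau>: "\<tau> > 0" and no_vertex: "\<forall>v. g v \<noteq> \<tau>" and nonempty: "{v. g v > \<tau>} \<noteq> {}"
  shows "(\<Sum>v | g v > \<tau>. vmeas G v) / \<phi> (\<Sum>v | g v > \<tau>. vmeas G v) \<le> (\<Sum>e\<in>crossing_edges A g \<tau>. cond G e)"
proof -
  let ?\<Omega> = "superlevel g \<tau>" and ?U = "{v. g v > \<tau>}"
  have UA: "?U \<subseteq> A" using g \<tau> by (auto simp: supported_on_def)
  have fin: "finite ?U" using finite_subset[OF UA A(1)] .
  have vertices: "{v. Vx v \<in> ?\<Omega>} = ?U" by (simp add: Vx_in_superlevel)
  have "admissible G ?\<Omega>"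
    unfolding admissible_def using gopen_superlevel superlevel_boundary(1)[OF A(1) g \<tau> no_vertex] UA A(2)
    by (auto simp: Vx_in_superlevel)
  moreover have "vmeas G summable_on {v. Vx v \<in> ?\<Omega>}"
    unfolding vertices using fin by (rule summable_on_finite)
  moreover have vol: "vol G ?\<Omega> = (\<Sum>v\<in>?U. vmeas G v)"
    unfolding vol_def vertices using fin by (rule infsum_finite)
  moreover have "vol G ?\<Omega> > 0"
    unfolding vol using nonempty fin vmeas_pos by (intro sum_pos) auto
  ultimately have "boundary_area G ?\<Omega> \<ge> vol G ?\<Omega> / \<phi> (vol G ?\<Omega>)"
    using isoperimetric by blast
  then show ?thesis
    using superlevel_boundary(2)[OF A(1) g \<tau> no_vertex] by (simp add: vol)
qed

text \<open>The coarea formula in pointwise form: for almost every level \<open>s\<close> (namely, avoiding the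
  finitely many values \<open>g(v)\<^sup>2\<close>), the isoperimetric inequality applies to \<open>{g > \<surd>s}\<close>.\<close>

lemma level_volume_le_level_area:
  assumes A: "finite A" "A \<inter> bdry G = {}" and g: "supported_on A g" "\<forall>u. g u \<ge> 0"
    and m: "m > 0" "(\<Sum>v | v \<in> A \<and> g v \<noteq> 0. vmeas G v) \<le> m"
    and s: "s \<notin> (\<lambda>v. (g v)\<^sup>2) ` A"
  shows "level_volume A g s / \<phi> m \<le> level_area A g s"
proof (cases "s > 0")
  case False
  then have "level_volume A g s = 0" by (simp add: level_volume_def indicator_def)
  moreover have "level_area A g s \<ge> 0"
    unfolding level_area_def using cond_pos by (intro sum_nonneg) (simp add: less_imp_le)
  ultimately show ?thesis by simp
next
  case True
  define \<tau> where "\<tau> = sqrt s"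
  have \<tau>: "\<tau> > 0" using True by (simp add: \<tau>_def)
  let ?U = "{v. g v > \<tau>}" and ?W = "\<Sum>v | g v > \<tau>. vmeas G v"
  have UA: "?U \<subseteq> A" using g \<tau> by (auto simp: supported_on_def)
  have no_vertex: "\<forall>v. g v \<noteq> \<tau>"
  proof (intro allI notI)
    fix v assume "g v = \<tau>"
    then have "v \<in> A" "(g v)\<^sup>2 = s" using g \<tau> True by (auto simp: supported_on_def \<tau>_def)
    with s show False by (metis image_eqI)
  qed
  have volume: "level_volume A g s = ?W"
    unfolding \<tau>_def by (rule level_volume_eq_superlevel[OF A(1) g True])
  show ?thesis
  proof (cases "?U = {}")
    case True
    then show ?thesis
      using volume level_area_eq_crossing[OF A(1) g(2) \<open>s > 0\<close>] cond_pos
      by (simp add: sum_nonneg less_imp_le)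
  next
    case False
    have W: "?W > 0"
      using False finite_subset[OF UA A(1)] vmeas_pos by (intro sum_pos) auto
    have "?W \<le> (\<Sum>v | v \<in> A \<and> g v \<noteq> 0. vmeas G v)"
      using A(1) UA \<tau> vmeas_pos by (intro sum_mono2) (auto intro: less_imp_le)
    with m have "\<phi> ?W \<le> \<phi> m"
      using phi_mono W by (auto simp: mono_on_def)
    moreover have "\<phi> ?W > 0" using phi_pos W by blast
    ultimately have "?W / \<phi> m \<le> ?W / \<phi> ?W" using W by (intro divide_left_mono) auto
    also have "\<dots> \<le> (\<Sum>e\<in>crossing_edges A g \<tau>. cond G e)"
      using isoperimetric_superlevel[OF A g(1) \<tau> no_vertex False] .
    finally show ?thesis
      using volume level_area_eq_crossing[OF A(1) g(2) \<open>s > 0\<close>] by (simp add: \<tau>_def)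
  qed
qed

text \<open>Integrating over levels and absorbing \<open>\<parallel>g\<parallel>\<^sup>2\<close> via AM-GM with the weight
  \<open>\<theta> = 8 r \<phi>(m)\<close>.\<close>

theorem faber_krahn:
  assumes A: "finite A" "A \<inter> bdry G = {}" and g: "supported_on A g" "\<forall>u. g u \<ge> 0"
    and m: "m > 0" "(\<Sum>v | v \<in> A \<and> g v \<noteq> 0. vmeas G v) \<le> m"
    and r: "r > 0" "rho_le r"
  shows "inner_on A g g \<le> 8 * r * (\<phi> m)\<^sup>2 * dirichlet_form A g g"
proof -
  have \<phi>: "\<phi> m > 0" using phi_pos m by blast
  have "AE s in lborel. s \<notin> (\<lambda>v. (g v)\<^sup>2) ` A"
    using A by (intro AE_not_in finite_imp_null_set_lborel) simp
  then have "AE s in lborel. level_volume A g s / \<phi> m \<le> level_area A g s"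
    by eventually_elim (rule level_volume_le_level_area[OF A g m])
  then have "integral\<^sup>L lborel (\<lambda>s. level_volume A g s / \<phi> m) \<le> integral\<^sup>L lborel (level_area A g)"
    using level_volume_integral(1) level_area_integral(1)
    by (intro integral_mono_AE integrable_divide_zero)
  then have "inner_on A g g / \<phi> m \<le> integral\<^sup>L lborel (level_area A g)"
    by (simp add: level_volume_integral(2))
  also have "\<dots> \<le> (8 * r * \<phi> m) / 2 * dirichlet_form A g g + 1 / (2 * (8 * r * \<phi> m)) * (8 * r * inner_on A g g)"
    unfolding level_area_integral(2) using r \<phi> by (intro sum_edges_diff_sq_le[OF A(1) g]) auto
  also have "\<dots> = 4 * r * \<phi> m * dirichlet_form A g g + inner_on A g g / (2 * \<phi> m)"
    using r \<phi> by (simp add: field_simps)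
  finally have "inner_on A g g / (2 * \<phi> m) \<le> 4 * r * \<phi> m * dirichlet_form A g g"
    using \<phi> by (simp add: field_simps)
  then show ?thesis
    using \<phi> by (simp add: divide_le_eq power2_eq_square mult_ac)
qed

text \<open>Nash's argument: Faber-Krahn applied to \<open>(f - J/4)\<^sup>+\<close>, where \<open>f = K\<^sub>A(x, \<cdot>, \<tau>/2)\<close> has
  \<open>\<parallel>f\<parallel>\<^sup>2 = J = K\<^sub>A(x, x, \<tau>)\<close> and mass at most 1, so that \<open>(f - J/4)\<^sup>+\<close> is supported on a set
  of measure at most \<open>4/J\<close> and keeps at least half of \<open>\<parallel>f\<parallel>\<^sup>2\<close>.\<close>

lemma nash_inequality:
  assumes A: "finite A" "A \<inter> bdry G = {}" and basis: "is_eigenbasis G A lam ph" and x: "x \<in> A"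
    and \<tau>: "\<tau> \<ge> 0" and r: "r > 0" "rho_le r"
  shows "diag_heat A lam ph x \<tau> / (16 * r * (\<phi> (4 / diag_heat A lam ph x \<tau>))\<^sup>2)
    \<le> diag_heat_rate A lam ph x \<tau>"
proof -
  define J where "J = diag_heat A lam ph x \<tau>"
  define f where "f = heat_column A lam ph x (\<tau> / 2)"
  define h where "h = (\<lambda>u. max (f u - J / 4) 0)"
  have J: "J > 0" using diag_heat_pos[OF A(1) basis x] by (simp add: J_def)
  have f_nonneg: "\<forall>u. f u \<ge> 0" using heat_column_nonneg[OF A(1) basis x] \<tau> by (simp add: f_def)
  have mass: "(\<Sum>u\<in>A. vmeas G u * f u) \<le> 1"
    using heat_column_mass_le_1[OF A(1) basis] \<tau> by (simp add: f_def)
  have "J - 2 * (J / 4) * 1 \<le> inner_on A f f - 2 * (J / 4) * (\<Sum>u\<in>A. vmeas G u * f u)"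
    using mass J inner_on_heat_column[OF A(1) basis] by (simp add: f_def J_def)
  also have "\<dots> \<le> inner_on A h h"
    unfolding h_def using f_nonneg J by (intro inner_on_truncation_ge) auto
  finally have h_norm: "J / 2 \<le> inner_on A h h" by simp
  have "(\<Sum>v | v \<in> A \<and> h v \<noteq> 0. vmeas G v) \<le> (\<Sum>u\<in>A. vmeas G u * f u) / (J / 4)"
    unfolding h_def using truncation_support_measure_le[OF A(1) f_nonneg, of "J / 4"] J by simp
  also have "\<dots> \<le> 4 / J"
    using mass J divide_right_mono[OF mass, of "J / 4"] by simp
  finally have "inner_on A h h \<le> 8 * r * (\<phi> (4 / J))\<^sup>2 * dirichlet_form A h h"
    using J f_nonneg heat_column_supported[OF A(1) basis]
    by (intro faber_krahn[OF A _ _ _ _ r]) (auto simp: h_def f_def supported_on_def)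
  also have "\<dots> \<le> 8 * r * (\<phi> (4 / J))\<^sup>2 * diag_heat_rate A lam ph x \<tau>"
    using dirichlet_form_truncation_le[of A f "J / 4"] dirichlet_form_heat_column[OF A(1) basis] r
    by (intro mult_left_mono) (auto simp: h_def f_def)
  finally have "J / 2 \<le> 8 * r * (\<phi> (4 / J))\<^sup>2 * diag_heat_rate A lam ph x \<tau>"
    using h_norm by linarith
  moreover have "\<phi> (4 / J) > 0" using phi_pos J by simp
  ultimately show ?thesis using r by (simp add: J_def field_simps)
qed

section \<open>The on-diagonal heat kernel bound\<close>

definition tail_integral :: "real \<Rightarrow> ennreal" where
  "tail_integral y = (\<integral>\<^sup>+ u \<in> {y<..}. ennreal ((\<phi> (4 / u))\<^sup>2 / u) \<partial>lborel)"

lemma tail_integral_antimono: "y \<le> z \<Longrightarrow> tail_integral z \<le> tail_integral y"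
  unfolding tail_integral_def by (intro nn_integral_mono) (auto split: split_indicator)

lemma phi_sq_antimono: "0 < u \<Longrightarrow> u \<le> v \<Longrightarrow> (\<phi> (4 / v))\<^sup>2 \<le> (\<phi> (4 / u))\<^sup>2"
  using phi_pos phi_mono
  by (intro power_mono) (auto simp: mono_on_def frac_le less_imp_le)

lemma tail_integral_pos:
  assumes y: "y > 0"
  shows "tail_integral y > 0"
proof -
  define c where "c = (\<phi> (4 / (y + 1)))\<^sup>2 / (y + 1)"
  have c: "c > 0" using phi_pos[rule_format, of "4 / (y + 1)"] y by (simp add: c_def)
  have "c \<le> (\<phi> (4 / u))\<^sup>2 / u" if "y < u" "u < y + 1" for u
    unfolding c_def using that y phi_sq_antimono[of u "y + 1"]
    by (intro frac_le) auto
  then have "ennreal c * indicator {y<..<y + 1} u \<le> ennreal ((\<phi> (4 / u))\<^sup>2 / u) * indicator {y<..} u" for u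
    by (auto split: split_indicator intro: ennreal_leI)
  then have "(\<integral>\<^sup>+ u. ennreal c * indicator {y<..<y + 1} u \<partial>lborel) \<le> tail_integral y"
    unfolding tail_integral_def by (rule nn_integral_mono)
  moreover have "(\<integral>\<^sup>+ u. ennreal c * indicator {y<..<y + 1} u \<partial>lborel) = ennreal c"
    by (simp add: nn_integral_cmult_indicator)
  ultimately show ?thesis using c by (metis ennreal_less_zero_iff order_less_le_trans)
qed

lemma tail_integral_diag_heat_ge:
  assumes A: "finite A" "A \<inter> bdry G = {}" and basis: "is_eigenbasis G A lam ph" and x: "x \<in> A"
    and t: "t > 0" and r: "r > 0" "rho_le r"
  shows "ennreal (t / (16 * r)) \<le> tail_integral (diag_heat A lam ph x t)"
  unfolding tail_integral_def
proof (rule tail_integral_ge_of_decay[OF t])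
  show "continuous_on {0..t} (diag_heat_rate A lam ph x)"
    unfolding diag_heat_rate_def by (intro continuous_intros)
  show "diag_heat A lam ph x \<tau> / (16 * r * (\<phi> (4 / diag_heat A lam ph x \<tau>))\<^sup>2)
      \<le> diag_heat_rate A lam ph x \<tau>" if "\<tau> \<in> {0..t}" for \<tau>
    using nash_inequality[OF A basis x _ r] that by (simp add: mult.assoc)
  show "(\<phi> (4 / u))\<^sup>2 > 0" if "u > 0" for u
    using phi_pos[rule_format, of "4 / u"] that by simp
qed (use r diag_heat_has_derivative diag_heat_pos[OF A(1) basis x] phi_sq_antimono in auto)

text \<open>Otherwise \<open>{x}\<close> would be an admissible set with empty boundary.\<close>

lemma interior_incident_nonempty:
  assumes "x \<notin> bdry G"
  shows "incident G x \<noteq> {}"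
proof
  assume no_edges: "incident G x = {}"
  let ?g = "indicator {x} :: _ \<Rightarrow> real"
  have "(\<Sum>v | ?g v > 1 / 2. vmeas G v) / \<phi> (\<Sum>v | ?g v > 1 / 2. vmeas G v)
      \<le> (\<Sum>e\<in>crossing_edges {x} ?g (1 / 2). cond G e)"
    using assms by (intro isoperimetric_superlevel supported_on_indicator) (auto simp: indicator_def)
  moreover have "{v. ?g v > 1 / 2} = {x}" by (auto simp: indicator_def)
  moreover have "crossing_edges {x} ?g (1 / 2) = {}"
    using no_edges by (simp add: crossing_edges_def edges_at_def)
  ultimately have "vmeas G x / \<phi> (vmeas G x) \<le> 0" by simp
  moreover have "vmeas G x / \<phi> (vmeas G x) > 0" using vmeas_pos[of x] phi_pos by simp
  ultimately show False by simp
qed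

lemma rho_sup_nonzero:
  assumes "x \<notin> bdry G"
  shows "rho_sup G \<noteq> 0"
proof
  assume "rho_sup G = 0"
  then have "(\<Sum>e\<in>incident G x. cond G e * len G e) \<le> 0"
    using rho_le_rho_sup[of 0] by (simp add: rho_le_def)
  moreover have "(\<Sum>e\<in>incident G x. cond G e * len G e) > 0"
    using interior_incident_nonempty[OF assms] finite_incident cond_pos len_pos
    by (intro sum_pos) auto
  ultimately show False by simp
qed

lemma heatK_fin_le_level:
  assumes A: "finite A" "A \<inter> bdry G = {}" and t: "t > 0" and y: "y > 0"
    and level: "tail_integral y \<le> 1 / (32 * rho_sup G) * ennreal t"
  shows "heatK_fin G A x x t \<le> y"
proof (cases "x \<in> A")
  case False
  with A(1) y show ?thesis
    by (simp add: heatK_fin_eq_diag_heat diag_heat_outside is_eigenbasis_eigvals_eigfuns)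
next
  case x: True
  then have "rho_sup G \<noteq> 0" using A(2) rho_sup_nonzero by blast
  then show ?thesis
  proof (cases "rho_sup G" rule: ennreal_cases)
    case top
    \<comment> \<open>then \<open>C = 1 / (32 * \<infinity>) = 0\<close>, below every value of the tail integral\<close>
    then show ?thesis using level tail_integral_pos[OF y] by simp
  next
    case (real r)
    with \<open>rho_sup G \<noteq> 0\<close> have r: "r > 0" by auto
    have "1 / (32 * rho_sup G) * ennreal t = ennreal (t / (32 * r))"
      using real r t by (simp add: ennreal_divide_numeral_mult)
    with level have level': "tail_integral y \<le> ennreal (t / (32 * r))" by simp
    show ?thesis
    proof (rule ccontr)
      assume "\<not> heatK_fin G A x x t \<le> y"
      then have "tail_integral (heatK_fin G A x x t) \<le> tail_integral y"
        by (intro tail_integral_antimono) simp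
      moreover have "ennreal (t / (16 * r)) \<le> tail_integral (heatK_fin G A x x t)"
        unfolding heatK_fin_eq_diag_heat using r real rho_le_rho_sup
        by (intro tail_integral_diag_heat_ge[OF A is_eigenbasis_eigvals_eigfuns[OF A(1)] x t]) auto
      ultimately have "ennreal (t / (16 * r)) \<le> ennreal (t / (32 * r))"
        using level' by (meson order_trans)
      then have "t / (16 * r) \<le> t / (32 * r)"
        using t r by simp
      then show False using t r by (simp add: field_simps)
    qed
  qed
qed

end

theorem mainTheorem19:
  fixes G :: "('v, 'e) mgraph" and \<phi> :: "real \<Rightarrow> real"
  assumes "wf_graph G" and "locally_finite G"
    and "\<forall>x>0. \<phi> x > 0" and "mono_on {0<..} \<phi>"
    and iso: "\<forall>\<Omega>. admissible G \<Omega> \<and> vmeas G summable_on {v. Vx v \<in> \<Omega>} \<and> vol G \<Omega> > 0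
              \<longrightarrow> boundary_area G \<Omega> \<ge> vol G \<Omega> / \<phi> (vol G \<Omega>)"
  defines "F \<equiv> (\<lambda>x. \<integral>\<^sup>+ u \<in> {x<..}. ennreal ((\<phi> (4 / u))\<^sup>2 / u) \<partial>lborel)"
    and "C \<equiv> 1 / (32 * rho_sup G)"
  shows "\<forall>x t. t > 0 \<longrightarrow> ereal (heatK G x x t) \<le> gen_inv F (C * ennreal t)"
proof (intro allI impI)
  fix x and t :: real
  assume t: "t > 0"
  interpret isoperimetric_graph G \<phi>
    using assms(1-5) by unfold_locales auto
  have F: "F = tail_integral" by (simp add: F_def tail_integral_def fun_eq_iff)
  have "heatK G x x t \<le> y" if "y > 0" "F y \<le> C * ennreal t" for y
    unfolding heatK_eq_SUP[OF less_imp_le[OF t]]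
    using that heatK_fin_le_level[OF _ _ t, of _ y x]
    by (intro cSUP_least) (auto simp: F C_def)
  then show "ereal (heatK G x x t) \<le> gen_inv F (C * ennreal t)"
    unfolding gen_inv_def by (auto intro!: Inf_greatest)
qed

end
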